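(* Fix $P>0$, $\sigma>0$, $c\in(0,P)$, and let $\lambda_n:=2\Phi(-\log n)$, $d=3\sigma\log n$, $r_1=\sqrt{cn}$, $r_2=(cn)^{1/4}$. For all sufficiently large $n$ there exist the following objects: a $d$-angle-dense arrangement $\{o_{s_1}\}_{s_1=1}^{N_1}$ on the sphere of radius $r_1$ centred at the origin in $\mathbb{R}^n$, and for each $s_1$ a $d$-angle-dense arrangement $\{o_{s_1,s_2}\}_{s_2=1}^{N_2}$ on the sphere of radius $r_2$ centred at $o_{s_1}$ inside the affine hyperplane $o_{s_1}+\{x:(x,o_{s_1})=0\}$, such that the code with code words $u_{(s_1,s_2)}=o_{s_1,s_2}$ and decoding sets \[ \mathcal{D}_{(s_1,s_2)}=\Bigl\{y:\ \tfrac{|(y-o_{s_1},\,o_{s_1})|}{r_1}\le\sigma\log n\Bigr\}\cap\Bigl\{y:\ \tfrac{|(y-o_{s_1,s_2},\,o_{s_1,s_2}-o_{s_1})|}{r_2}\le\sigma\log n\Bigr\} \] is an $(n,N_1N_2,2\lambda_n,\lambda_n)$ DI code for the AWGN channel with noise standard deviation $\sigma$ and power constraint $P$, with $\frac{\log(N_1N_2)}{n\log n}\ge\frac38-o(1)$ as $n\to\infty$. In particular the linearithmic rate $\dot R=\frac38$ is achievable.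
   Context: AWGN channel: on input $x^n\in\mathbb{R}^n$ the output is $Y^n=x^n+\sigma Z^n$ with $Z^n$ having i.i.d. $\mathcal{N}(0,1)$ components; i.e. output distribution $\mathcal{G}_{x^n}=\mathcal{N}(x^n,\sigma^2 I_n)$. Admissible inputs satisfy $\|x^n\|^2\le nP$. An $(n,N,\lambda_1,\lambda_2)$ DI code is a family $\{(u_i,\mathcal{D}_i)\}_{i=1}^N$ of admissible $u_i\in\mathbb{R}^n$ and measurable $\mathcal{D}_i\subseteq\mathbb{R}^n$ with $\mathcal{G}_{u_i}(\mathcal{D}_i)\ge 1-\lambda_1$ and $\mathcal{G}_{u_j}(\mathcal{D}_i)\le\lambda_2$ for all $i\neq j$. A number $\dot R>0$ is an achievable linearithmic rate if for every $\epsilon>0$ there are $n_0$ and $(n,N^{(n)},\lambda_1^{(n)},\lambda_2^{(n)})$ DI codes for all $n\ge n_0$ with $\lambda_1^{(n)},\lambda_2^{(n)}\to0$ and $\frac{\log N^{(n)}}{n\log n}\ge\dot R-\epsilon$. $\Phi$ is the standard Gaussian CDF. $\Pi_{\vec a}\vec v:=\frac{(\vec a,\vec v)}{\|\vec a\|^2}\vec a$. A set of points $\{p_j\}$ on a sphere centred at a point $c$ is $d$-angle-dense if, writing $a_j=p_j-c$, one has $\|\Pi_{a_k}a_j-a_k\|\ge d$ for all $j\neq k$. Logarithms are to base 2. *)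

theory Defs
  imports "HOL-Probability.Probability"
begin

text \<open>Vectors of R^n are represented as extensional functions nat => real
  (elements of PiE {..<n} (%_. UNIV)), the carrier of the product measure.\<close>

definition inner_n :: "nat \<Rightarrow> (nat \<Rightarrow> real) \<Rightarrow> (nat \<Rightarrow> real) \<Rightarrow> real" where
  "inner_n n x y = (\<Sum>i<n. x i * y i)"

definition norm_n :: "nat \<Rightarrow> (nat \<Rightarrow> real) \<Rightarrow> real" where
  "norm_n n x = sqrt (inner_n n x x)"

definition vsub :: "(nat \<Rightarrow> real) \<Rightarrow> (nat \<Rightarrow> real) \<Rightarrow> (nat \<Rightarrow> real)" where
  "vsub x y = (\<lambda>i. x i - y i)"

definition proj_n :: "nat \<Rightarrow> (nat \<Rightarrow> real) \<Rightarrow> (nat \<Rightarrow> real) \<Rightarrow> (nat \<Rightarrow> real)" where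
  "proj_n n a v = (\<lambda>i. inner_n n a v / (norm_n n a)\<^sup>2 * a i)"

definition Rn :: "nat \<Rightarrow> (nat \<Rightarrow> real) set" where
  "Rn n = PiE {..<n} (\<lambda>_. UNIV)"

definition gauss_out :: "nat \<Rightarrow> real \<Rightarrow> (nat \<Rightarrow> real) \<Rightarrow> (nat \<Rightarrow> real) measure" where
  "gauss_out n \<sigma> x = PiM {..<n} (\<lambda>i. density lborel (normal_density (x i) \<sigma>))"

definition Phi :: "real \<Rightarrow> real" where
  "Phi t = measure (density lborel std_normal_density) {..t}"

definition DI_code :: "nat \<Rightarrow> real \<Rightarrow> real \<Rightarrow> 'a set \<Rightarrow> real \<Rightarrow> real \<Rightarrow>
    ('a \<Rightarrow> (nat \<Rightarrow> real)) \<Rightarrow> ('a \<Rightarrow> (nat \<Rightarrow> real) set) \<Rightarrow> bool" where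
  "DI_code n \<sigma> P I l1 l2 u D \<longleftrightarrow> finite I \<and>
     (\<forall>i\<in>I. u i \<in> Rn n \<and> (norm_n n (u i))\<^sup>2 \<le> real n * P \<and>
        D i \<in> sets (gauss_out n \<sigma> (u i)) \<and>
        measure (gauss_out n \<sigma> (u i)) (D i) \<ge> 1 - l1) \<and>
     (\<forall>i\<in>I. \<forall>j\<in>I. i \<noteq> j \<longrightarrow> measure (gauss_out n \<sigma> (u j)) (D i) \<le> l2)"

definition angle_dense :: "nat \<Rightarrow> (nat \<Rightarrow> real) \<Rightarrow> ('a \<Rightarrow> (nat \<Rightarrow> real)) \<Rightarrow> 'a set \<Rightarrow> real \<Rightarrow> bool" where
  "angle_dense n c p J d \<longleftrightarrow>
     (\<forall>j\<in>J. \<forall>k\<in>J. j \<noteq> k \<longrightarrow>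
        norm_n n (vsub (proj_n n (vsub (p k) c) (vsub (p j) c)) (vsub (p k) c)) \<ge> d)"

definition achievable_lin_rate :: "real \<Rightarrow> real \<Rightarrow> real \<Rightarrow> bool" where
  "achievable_lin_rate \<sigma> P R \<longleftrightarrow> R > 0 \<and> (\<forall>\<epsilon>>0. \<exists>n0 (N :: nat \<Rightarrow> nat) l1 l2
     (u :: nat \<Rightarrow> nat \<Rightarrow> (nat \<Rightarrow> real)) D.
       (\<forall>n\<ge>n0. DI_code n \<sigma> P {..<N n} (l1 n) (l2 n) (u n) (D n) \<and>
                log 2 (real (N n)) / (real n * log 2 (real n)) \<ge> R - \<epsilon>) \<and>
       l1 \<longlonglongrightarrow> 0 \<and> l2 \<longlonglongrightarrow> 0)"

end

theory Submission
  imports Defs "HOL-Real_Asymp.Real_Asymp"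
begin

(* Outer points o1 s1 form a spherical code of radius
   r1 = sqrt (c n), and the inner points o2 s1 s2 form a spherical code of radius r2 = (c n)^(1/4)
   around o1 s1 inside the hyperplane orthogonal to o1 s1; as r2^2 = r1, the power r1^2 + r2^2 stays
   below n P for large n.  The decoder of (s1, s2) thresholds the projections of y - o1 s1 on o1 s1
   and of y - o2 s1 s2 on o2 s1 s2 - o1 s1.  Both are Gaussian with deviation sigma times the length
   of the direction, so the sent codeword fails each test with probability at most 2 Phi (- log n).
   For any other codeword one of the projections is shifted by at least twice the threshold, since
   points of the same level are at squared distance at least 2 d r_i; between different outer points
   the inner offsets cost only 2 r2^2 = 2 r1, which is negligible against d r1.  Spherical codes of
   separation delta with about (R / delta)^m points in dimension m are obtained by rescaling the
   richest shell of integer points in a cube and thinning it greedily.  With delta_i^2 = 2 d r_i and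
   d = 3 sigma log n this gives log N1 ~ (n/4) log n and log N2 ~ (n/8) log n, hence the rate 3/8. *)

section \<open>Inner products of coordinate vectors\<close>

lemma inner_n_commute: "inner_n n x y = inner_n n y x"
  unfolding inner_n_def by (simp add: mult.commute)

lemma inner_n_diff_left: "inner_n n (vsub a b) c = inner_n n a c - inner_n n b c"
  unfolding inner_n_def vsub_def by (simp add: left_diff_distrib sum_subtractf)

lemma inner_n_diff_right: "inner_n n c (vsub a b) = inner_n n c a - inner_n n c b"
  unfolding inner_n_def vsub_def by (simp add: right_diff_distrib sum_subtractf)

lemma inner_n_diff_self:
  "inner_n n (vsub a b) (vsub a b) = inner_n n a a - 2 * inner_n n a b + inner_n n b b"
  by (simp add: inner_n_diff_left inner_n_diff_right inner_n_commute[of n b a])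

lemma inner_n_scale_left: "inner_n n (\<lambda>i. c * x i) y = c * inner_n n x y"
  unfolding inner_n_def by (simp add: sum_distrib_left mult.assoc)

lemma inner_n_scale_right: "inner_n n y (\<lambda>i. c * x i) = c * inner_n n y x"
  unfolding inner_n_def by (simp add: sum_distrib_left mult.left_commute)

lemma inner_n_uminus_right: "inner_n n c (\<lambda>i. - a i) = - inner_n n c a"
  unfolding inner_n_def by (simp add: sum_negf)

lemma inner_n_self_nonneg: "0 \<le> inner_n n x x"
  unfolding inner_n_def by (simp add: sum_nonneg)

lemma inner_n_cong:
  "(\<And>i. i < n \<Longrightarrow> x i = x' i) \<Longrightarrow> (\<And>i. i < n \<Longrightarrow> y i = y' i) \<Longrightarrow>
   inner_n n x y = inner_n n x' y'"
  unfolding inner_n_def by (rule sum.cong) auto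

lemma inner_n_self_eq_orthogonal:
  assumes "inner_n n (vsub u v) v = 0"
  shows "inner_n n u u = inner_n n (vsub u v) (vsub u v) + inner_n n v v"
proof -
  have "inner_n n u v = inner_n n v v" using assms by (simp add: inner_n_diff_left)
  thus ?thesis unfolding inner_n_diff_self by (simp add: inner_n_commute[of n v u])
qed

lemma vsub_vsub_cancel [simp]: "vsub (vsub a c) (vsub b c) = vsub a b"
  unfolding vsub_def by simp

lemma power2_norm_n: "(norm_n n x)\<^sup>2 = inner_n n x x"
  unfolding norm_n_def using inner_n_self_nonneg[of n x] by simp

lemma norm_n_nonneg: "0 \<le> norm_n n x"
  unfolding norm_n_def using inner_n_self_nonneg[of n x] by simp

lemma norm_n_eqI: "inner_n n a a = r\<^sup>2 \<Longrightarrow> 0 \<le> r \<Longrightarrow> norm_n n a = r"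
  unfolding norm_n_def by simp

lemma norm_n_uminus: "norm_n n (\<lambda>i. - a i) = norm_n n a"
  unfolding norm_n_def inner_n_def by simp

lemma abs_inner_n_le_norm_n_mult: "\<bar>inner_n n a b\<bar> \<le> norm_n n a * norm_n n b"
proof -
  have "(inner_n n a b)\<^sup>2 \<le> inner_n n a a * inner_n n b b"
    unfolding inner_n_def using Cauchy_Schwarz_ineq_sum[of a b "{..<n}"]
    by (simp add: power2_eq_square)
  also have "\<dots> = (norm_n n a * norm_n n b)\<^sup>2"
    by (simp add: power_mult_distrib power2_norm_n)
  finally show ?thesis
    using norm_n_nonneg[of n a] norm_n_nonneg[of n b] by (simp add: power2_le_iff_abs_le)
qed

lemma restrict_in_Rn [simp]: "restrict f {..<n} \<in> Rn n"
  unfolding Rn_def by simp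

lemma inner_n_restrict_left [simp]: "inner_n n (restrict f {..<n}) g = inner_n n f g"
  by (rule inner_n_cong) auto

lemma inner_n_restrict_right [simp]: "inner_n n g (restrict f {..<n}) = inner_n n g f"
  by (rule inner_n_cong) auto

text \<open>For a = p k - c and b = p j - c on the sphere of radius r,
  the distance from the projection of b on a to a is |a - b|^2 / (2 r).\<close>

lemma angle_dense_if_separated:
  assumes r: "r > 0"
    and on_sphere: "\<And>j. j \<in> J \<Longrightarrow> inner_n n (vsub (p j) c) (vsub (p j) c) = r\<^sup>2"
    and separated: "\<And>j k. j \<in> J \<Longrightarrow> k \<in> J \<Longrightarrow> j \<noteq> k \<Longrightarrow>
        2 * d * r \<le> inner_n n (vsub (p j) (p k)) (vsub (p j) (p k))"
  shows "angle_dense n c p J d"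
  unfolding angle_dense_def
proof (intro ballI impI)
  fix j k assume j: "j \<in> J" and k: "k \<in> J" and jk: "j \<noteq> k"
  define a where "a = vsub (p k) c"
  define b where "b = vsub (p j) c"
  have aa: "inner_n n a a = r\<^sup>2" and bb: "inner_n n b b = r\<^sup>2"
    using on_sphere j k by (simp_all add: a_def b_def)
  have "2 * d * r \<le> inner_n n (vsub b a) (vsub b a)"
    using separated[OF j k jk] by (simp add: a_def b_def)
  hence sep: "d * r + inner_n n a b \<le> r\<^sup>2"
    unfolding inner_n_diff_self aa bb inner_n_commute[of n b a] by simp
  have proj: "vsub (proj_n n a b) a = (\<lambda>i. (inner_n n a b / r\<^sup>2 - 1) * a i)"
    unfolding vsub_def proj_n_def norm_n_eqI[OF aa less_imp_le[OF r]]
    by (auto simp: algebra_simps)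
  have "inner_n n (vsub (proj_n n a b) a) (vsub (proj_n n a b) a) = (inner_n n a b / r\<^sup>2 - 1)\<^sup>2 * r\<^sup>2"
    unfolding proj inner_n_scale_left inner_n_scale_right aa by (simp add: power2_eq_square)
  hence "norm_n n (vsub (proj_n n a b) a) = \<bar>inner_n n a b / r\<^sup>2 - 1\<bar> * r"
    using r unfolding norm_n_def by (simp add: real_sqrt_mult)
  also have "\<dots> \<ge> d"
  proof -
    have "r * (d * r + inner_n n a b) \<le> r * r\<^sup>2"
      using sep r by (intro mult_left_mono) auto
    hence "inner_n n a b / r\<^sup>2 - 1 \<le> - d / r"
      using r by (simp add: field_simps power2_eq_square)
    hence "d / r \<le> \<bar>inner_n n a b / r\<^sup>2 - 1\<bar>" by linarith
    thus ?thesis using r by (simp add: field_simps)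
  qed
  finally show "d \<le> norm_n n (vsub (proj_n n (vsub (p k) c) (vsub (p j) c)) (vsub (p k) c))"
    unfolding a_def b_def .
qed

section \<open>Gaussian projections\<close>

lemma space_gauss_out [simp]: "space (gauss_out n \<sigma> x) = Rn n"
  unfolding gauss_out_def Rn_def by (simp add: space_PiM)

lemma prob_space_gauss_out: "\<sigma> > 0 \<Longrightarrow> prob_space (gauss_out n \<sigma> x)"
  unfolding gauss_out_def by (intro prob_space_PiM prob_space_normal_density)

lemma borel_measurable_inner_n_vsub [measurable]:
  "(\<lambda>y. inner_n n (vsub y z) a) \<in> borel_measurable (gauss_out n \<sigma> x)"
  unfolding inner_n_def vsub_def gauss_out_def by measurable

lemma sets_gauss_out_Collect:
  assumes "Measurable.pred (gauss_out n \<sigma> x) P"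
  shows "{y \<in> Rn n. P y} \<in> sets (gauss_out n \<sigma> x)"
proof -
  have "{y \<in> Rn n. P y} = {y \<in> space (gauss_out n \<sigma> x). P y}" by simp
  also have "\<dots> \<in> sets (gauss_out n \<sigma> x)" using assms by measurable
  finally show ?thesis .
qed

lemma indep_vars_gauss_out_coordinates:
  assumes \<sigma>: "\<sigma> > 0" and n: "n \<noteq> 0"
  shows "prob_space.indep_vars (gauss_out n \<sigma> x)
           (\<lambda>i. density lborel (normal_density (x i) \<sigma>)) (\<lambda>i y. y i) {..<n}"
proof -
  interpret prob_space "gauss_out n \<sigma> x" by (rule prob_space_gauss_out[OF \<sigma>])
  let ?M = "\<lambda>i. density lborel (normal_density (x i) \<sigma>)"
  show ?thesis
  proof (subst indep_vars_iff_distr_eq_PiM')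
    show "{..<n} \<noteq> {}" using n by auto
    show "random_variable (?M i) (\<lambda>y. y i)" if "i \<in> {..<n}" for i
      unfolding gauss_out_def using that \<sigma> by measurable
    have "distr (gauss_out n \<sigma> x) (Pi\<^sub>M {..<n} ?M) (\<lambda>y. restrict (\<lambda>i. y i) {..<n})
        = distr (gauss_out n \<sigma> x) (gauss_out n \<sigma> x) (\<lambda>y. y)"
      by (intro distr_cong) (auto simp: gauss_out_def space_PiM PiE_def extensional_restrict)
    also have "\<dots> = Pi\<^sub>M {..<n} (\<lambda>i. distr (gauss_out n \<sigma> x) (?M i) (\<lambda>y. y i))"
      unfolding distr_id gauss_out_def
      by (intro PiM_cong refl distr_PiM_component[symmetric] prob_space_normal_density) (auto simp: \<sigma>)
    finally show "distr (gauss_out n \<sigma> x) (Pi\<^sub>M {..<n} ?M) (\<lambda>y. restrict (\<lambda>i. y i) {..<n}) =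
        Pi\<^sub>M {..<n} (\<lambda>i. distr (gauss_out n \<sigma> x) (?M i) (\<lambda>y. y i))" .
  qed
qed

lemma distributed_gauss_out_coordinate:
  assumes "i < n" and \<sigma>: "\<sigma> > 0"
  shows "distributed (gauss_out n \<sigma> x) lborel (\<lambda>y. y i) (normal_density (x i) \<sigma>)"
proof -
  let ?M = "\<lambda>i. density lborel (normal_density (x i) \<sigma>)"
  have "distr (gauss_out n \<sigma> x) lborel (\<lambda>y. y i) = distr (gauss_out n \<sigma> x) (?M i) (\<lambda>y. y i)"
    by (intro distr_cong) auto
  also have "\<dots> = ?M i"
    unfolding gauss_out_def
    by (intro distr_PiM_component prob_space_normal_density) (use assms in auto)
  finally show ?thesis
    unfolding distributed_def using assms by (auto simp: gauss_out_def)
qed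

lemma distributed_gauss_out_inner_n:
  assumes \<sigma>: "\<sigma> > 0" and a: "inner_n n a a > 0"
  shows "distributed (gauss_out n \<sigma> x) lborel (\<lambda>y. inner_n n (vsub y x) a)
           (normal_density 0 (\<sigma> * norm_n n a))"
proof -
  let ?G = "gauss_out n \<sigma> x"
  interpret prob_space ?G by (rule prob_space_gauss_out[OF \<sigma>])
  \<comment> \<open>coordinates with a i = 0 are dropped: a normal density of deviation 0 is not available\<close>
  define J where "J = {i\<in>{..<n}. a i \<noteq> 0}"
  have "J \<noteq> {}"
  proof
    assume "J = {}"
    hence "inner_n n a a = 0" unfolding inner_n_def J_def by simp
    thus False using a by simp
  qed
  have indep: "indep_vars (\<lambda>i. borel) (\<lambda>i y. a i * (y i - x i)) J"
  proof -
    have "indep_vars (\<lambda>i. borel) (\<lambda>i y. (\<lambda>z. a i * (z - x i)) (y i)) {..<n}"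
      by (rule indep_vars_compose2[OF indep_vars_gauss_out_coordinates[OF \<sigma>]])
        (use \<open>J \<noteq> {}\<close> in \<open>auto simp: J_def\<close>)
    thus ?thesis by (rule indep_vars_subset) (auto simp: J_def)
  qed
  have "distributed ?G lborel (\<lambda>y. a i * (y i - x i)) (normal_density 0 (\<bar>a i\<bar> * \<sigma>))"
    if "i \<in> J" for i
  proof -
    have "distributed ?G lborel (\<lambda>y. (- a i * x i) + a i * y i)
            (normal_density ((- a i * x i) + a i * x i) (\<bar>a i\<bar> * \<sigma>))"
      by (rule normal_density_affine[OF distributed_gauss_out_coordinate[OF _ \<sigma>] \<sigma>])
        (use that in \<open>auto simp: J_def\<close>)
    thus ?thesis by (simp add: algebra_simps)
  qed
  hence "distributed ?G lborel (\<lambda>y. \<Sum>i\<in>J. a i * (y i - x i))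
           (normal_density (\<Sum>i\<in>J. 0) (sqrt (\<Sum>i\<in>J. (\<bar>a i\<bar> * \<sigma>)\<^sup>2)))"
    by (intro sum_indep_normal[OF _ \<open>J \<noteq> {}\<close> indep]) (use \<sigma> in \<open>auto simp: J_def\<close>)
  moreover have "(\<Sum>i\<in>J. a i * (y i - x i)) = inner_n n (vsub y x) a" for y
  proof -
    have "(\<Sum>i\<in>J. a i * (y i - x i)) = (\<Sum>i<n. a i * (y i - x i))"
      by (rule sum.mono_neutral_left) (auto simp: J_def)
    thus ?thesis unfolding inner_n_def vsub_def by (simp add: mult.commute)
  qed
  moreover have "sqrt (\<Sum>i\<in>J. (\<bar>a i\<bar> * \<sigma>)\<^sup>2) = \<sigma> * norm_n n a"
  proof -
    have "(\<Sum>i\<in>J. (\<bar>a i\<bar> * \<sigma>)\<^sup>2) = (\<Sum>i<n. (\<bar>a i\<bar> * \<sigma>)\<^sup>2)"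
      by (rule sum.mono_neutral_left) (auto simp: J_def)
    also have "\<dots> = \<sigma>\<^sup>2 * inner_n n a a"
      unfolding inner_n_def
      by (simp add: sum_distrib_left power_mult_distrib power2_eq_square[symmetric] mult.commute)
    finally show ?thesis unfolding norm_n_def using \<sigma> by (simp add: real_sqrt_mult)
  qed
  ultimately show ?thesis by simp
qed

lemma measure_gauss_out_inner_n_le:
  assumes \<sigma>: "\<sigma> > 0" and a: "inner_n n a a > 0"
  shows "measure (gauss_out n \<sigma> x) {y \<in> Rn n. inner_n n (vsub y x) a \<le> \<sigma> * norm_n n a * t} = Phi t"
proof -
  let ?G = "gauss_out n \<sigma> x"
  interpret prob_space ?G by (rule prob_space_gauss_out[OF \<sigma>])
  let ?X = "\<lambda>y. (inner_n n (vsub y x) a - 0) / (\<sigma> * norm_n n a)"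
  have s: "\<sigma> * norm_n n a > 0" using \<sigma> a unfolding norm_n_def by simp
  have X: "distributed ?G lborel ?X std_normal_density"
    using normal_standard_normal_convert[OF s] distributed_gauss_out_inner_n[OF \<sigma> a, of x] by simp
  have "{y \<in> Rn n. inner_n n (vsub y x) a \<le> \<sigma> * norm_n n a * t} = ?X -` {..t} \<inter> space ?G"
    using s by (auto simp: field_simps)
  hence "measure ?G {y \<in> Rn n. inner_n n (vsub y x) a \<le> \<sigma> * norm_n n a * t}
      = measure (distr ?G lborel ?X) {..t}"
    using X by (subst measure_distr) (auto simp: distributed_def)
  also have "\<dots> = Phi t" using X unfolding distributed_def Phi_def by simp
  finally show ?thesis .
qed

definition slab :: "nat \<Rightarrow> (nat \<Rightarrow> real) \<Rightarrow> (nat \<Rightarrow> real) \<Rightarrow> real \<Rightarrow> (nat \<Rightarrow> real) set" where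
  "slab n z a w = {y \<in> Rn n. \<bar>inner_n n (vsub y z) a\<bar> \<le> w}"

lemma sets_slab [measurable]: "slab n z a w \<in> sets (gauss_out n \<sigma> x)"
  unfolding slab_def by (intro sets_gauss_out_Collect) measurable

lemma measure_gauss_out_slab_ge:
  assumes \<sigma>: "\<sigma> > 0" and a: "inner_n n a a > 0"
  shows "measure (gauss_out n \<sigma> x) (slab n x a (\<sigma> * norm_n n a * t)) \<ge> 1 - 2 * Phi (- t)"
proof -
  let ?G = "gauss_out n \<sigma> x"
  interpret prob_space ?G by (rule prob_space_gauss_out[OF \<sigma>])
  let ?A = "{y \<in> Rn n. inner_n n (vsub y x) a \<le> \<sigma> * norm_n n a * (-t)}"
  let ?B = "{y \<in> Rn n. inner_n n (vsub y x) (\<lambda>i. - a i) \<le> \<sigma> * norm_n n (\<lambda>i. - a i) * (-t)}"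
  have "inner_n n (\<lambda>i. - a i) (\<lambda>i. - a i) > 0" using a unfolding inner_n_def by simp
  hence AB: "prob ?A = Phi (-t)" "prob ?B = Phi (-t)"
    using measure_gauss_out_inner_n_le[OF \<sigma>] a by blast+
  have "space ?G - slab n x a (\<sigma> * norm_n n a * t) \<subseteq> ?A \<union> ?B"
    unfolding slab_def by (auto simp: norm_n_uminus inner_n_uminus_right)
  hence "prob (space ?G - slab n x a (\<sigma> * norm_n n a * t)) \<le> prob (?A \<union> ?B)"
    by (rule finite_measure_mono) (intro sets.Un sets_gauss_out_Collect; measurable)
  also have "\<dots> \<le> prob ?A + prob ?B"
    by (rule measure_subadditive) (intro sets_gauss_out_Collect; measurable | simp)+
  finally show ?thesis using prob_compl[OF sets_slab] AB by simp
qed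

lemma measure_gauss_out_slab_le:
  assumes \<sigma>: "\<sigma> > 0" and a: "inner_n n a a > 0"
    and far: "2 * (\<sigma> * norm_n n a * t) \<le> \<bar>inner_n n (vsub x z) a\<bar>"
  shows "measure (gauss_out n \<sigma> x) (slab n z a (\<sigma> * norm_n n a * t)) \<le> Phi (- t)"
proof -
  let ?G = "gauss_out n \<sigma> x"
  interpret prob_space ?G by (rule prob_space_gauss_out[OF \<sigma>])
  define \<mu> where "\<mu> = inner_n n (vsub x z) a"
  have S: "slab n z a (\<sigma> * norm_n n a * t)
      = {y \<in> Rn n. \<bar>inner_n n (vsub y x) a + \<mu>\<bar> \<le> \<sigma> * norm_n n a * t}"
    unfolding slab_def \<mu>_def by (simp add: inner_n_diff_left)
  show ?thesis
  proof (cases "\<mu> \<ge> 0")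
    case True
    have "slab n z a (\<sigma> * norm_n n a * t) \<subseteq> {y \<in> Rn n. inner_n n (vsub y x) a \<le> \<sigma> * norm_n n a * (-t)}"
      unfolding S using far True unfolding \<mu>_def[symmetric] by auto
    hence "prob (slab n z a (\<sigma> * norm_n n a * t))
        \<le> prob {y \<in> Rn n. inner_n n (vsub y x) a \<le> \<sigma> * norm_n n a * (-t)}"
      by (rule finite_measure_mono) (intro sets_gauss_out_Collect; measurable)
    thus ?thesis using measure_gauss_out_inner_n_le[OF \<sigma> a, of x "-t"] by simp
  next
    case False
    let ?B = "{y \<in> Rn n. inner_n n (vsub y x) (\<lambda>i. - a i) \<le> \<sigma> * norm_n n (\<lambda>i. - a i) * (-t)}"
    have a': "inner_n n (\<lambda>i. - a i) (\<lambda>i. - a i) > 0" using a unfolding inner_n_def by simp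
    have "slab n z a (\<sigma> * norm_n n a * t) \<subseteq> ?B"
      unfolding S using far False unfolding \<mu>_def[symmetric]
      by (auto simp: norm_n_uminus inner_n_uminus_right)
    hence "prob (slab n z a (\<sigma> * norm_n n a * t)) \<le> prob ?B"
      by (rule finite_measure_mono) (intro sets_gauss_out_Collect; measurable)
    thus ?thesis using measure_gauss_out_inner_n_le[OF \<sigma> a', of x "-t"] by simp
  qed
qed

section \<open>Error probabilities of the nested decoder\<close>

definition nested_decoder ::
    "nat \<Rightarrow> real \<Rightarrow> real \<Rightarrow> real \<Rightarrow> (nat \<Rightarrow> real) \<Rightarrow> (nat \<Rightarrow> real) \<Rightarrow> (nat \<Rightarrow> real) set" where
  "nested_decoder n r1 r2 \<tau> v u = {y \<in> Rn n.
     \<bar>inner_n n (vsub y v) v\<bar> / r1 \<le> \<tau> \<and> \<bar>inner_n n (vsub y u) (vsub u v)\<bar> / r2 \<le> \<tau>}"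

lemma nested_decoder_eq_slabs:
  assumes "r1 > 0" and "r2 > 0"
  shows "nested_decoder n r1 r2 \<tau> v u = slab n v v (\<tau> * r1) \<inter> slab n u (vsub u v) (\<tau> * r2)"
  using assms unfolding nested_decoder_def slab_def by (auto simp: field_simps)

lemma (in prob_space) prob_Int_ge:
  assumes "A \<in> events" and "B \<in> events"
  shows "prob A + prob B - 1 \<le> prob (A \<inter> B)"
proof -
  have "prob ((space M - A) \<union> (space M - B)) \<le> prob (space M - A) + prob (space M - B)"
    by (rule measure_subadditive) (use assms in auto)
  moreover have "space M - (A \<inter> B) = (space M - A) \<union> (space M - B)" by auto
  ultimately have "prob (space M - (A \<inter> B)) \<le> prob (space M - A) + prob (space M - B)"
    by simp
  thus ?thesis using prob_compl assms by (simp add: sets.Int)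
qed

lemma measure_nested_decoder_ge:
  assumes \<sigma>: "\<sigma> > 0" and r1: "r1 > 0" and r2: "r2 > 0"
    and v: "inner_n n v v = r1\<^sup>2" and h: "inner_n n (vsub u v) (vsub u v) = r2\<^sup>2"
    and orth: "inner_n n (vsub u v) v = 0"
  shows "measure (gauss_out n \<sigma> u) (nested_decoder n r1 r2 (\<sigma> * t) v u) \<ge> 1 - 2 * (2 * Phi (- t))"
proof -
  let ?G = "gauss_out n \<sigma> u"
  interpret prob_space ?G by (rule prob_space_gauss_out[OF \<sigma>])
  let ?S1 = "slab n u v (\<sigma> * norm_n n v * t)"
  let ?S2 = "slab n u (vsub u v) (\<sigma> * norm_n n (vsub u v) * t)"
  have "slab n v v (\<sigma> * t * r1) = ?S1"
    using orth norm_n_eqI[OF v] r1 unfolding slab_def by (auto simp: inner_n_diff_left mult_ac)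
  moreover have "slab n u (vsub u v) (\<sigma> * t * r2) = ?S2"
    using norm_n_eqI[OF h] r2 by (simp add: mult_ac)
  ultimately have D: "nested_decoder n r1 r2 (\<sigma> * t) v u = ?S1 \<inter> ?S2"
    using nested_decoder_eq_slabs[OF r1 r2] by simp
  have "prob ?S1 \<ge> 1 - 2 * Phi (- t)"
    by (rule measure_gauss_out_slab_ge[OF \<sigma>]) (use v r1 in simp)
  moreover have "prob ?S2 \<ge> 1 - 2 * Phi (- t)"
    by (rule measure_gauss_out_slab_ge[OF \<sigma>]) (use h r2 in simp)
  moreover have "prob ?S1 + prob ?S2 - 1 \<le> prob (nested_decoder n r1 r2 (\<sigma> * t) v u)"
    unfolding D by (intro prob_Int_ge) measurable
  ultimately show ?thesis by linarith
qed

text \<open>With e = v - v', the offset of u' from the slab around v is (u' - v', e) - |e|^2/2,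
  and |(u' - v', e)| \<le> r2 |e| \<le> |e|^2/8 + 2 r2^2.\<close>

lemma outer_offset_ge:
  assumes v: "inner_n n v v = r1\<^sup>2" and v': "inner_n n v' v' = r1\<^sup>2"
    and h': "inner_n n (vsub u' v') (vsub u' v') = r2\<^sup>2" and orth: "inner_n n (vsub u' v') v' = 0"
    and r2: "r2 \<ge> 0"
    and sep: "\<delta>1\<^sup>2 \<le> inner_n n (vsub v v') (vsub v v')"
    and cross: "2 * r2\<^sup>2 + w \<le> 3/8 * \<delta>1\<^sup>2"
  shows "w \<le> \<bar>inner_n n (vsub u' v) v\<bar>"
proof -
  define e where "e = vsub v v'"
  define \<epsilon> where "\<epsilon> = norm_n n e"
  have ee: "inner_n n e e = \<epsilon>\<^sup>2" unfolding \<epsilon>_def power2_norm_n ..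
  have "inner_n n (vsub u' v) v = inner_n n (vsub u' v') v - inner_n n e v"
    unfolding e_def by (simp add: inner_n_diff_left)
  also have "inner_n n (vsub u' v') v = inner_n n (vsub u' v') e"
    using orth unfolding e_def by (simp add: inner_n_diff_right)
  also have "inner_n n e v = \<epsilon>\<^sup>2 / 2"
    using ee v v' unfolding e_def inner_n_diff_self
    by (simp add: inner_n_diff_left inner_n_diff_right inner_n_commute)
  finally have \<mu>: "inner_n n (vsub u' v) v = inner_n n (vsub u' v') e - \<epsilon>\<^sup>2 / 2" .
  have "\<bar>inner_n n (vsub u' v') e\<bar> \<le> r2 * \<epsilon>"
    using abs_inner_n_le_norm_n_mult[of n "vsub u' v'" e] norm_n_eqI[OF h' r2] unfolding \<epsilon>_def by simp
  also have "\<dots> \<le> \<epsilon>\<^sup>2 / 8 + 2 * r2\<^sup>2"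
    using zero_le_power2[of "\<epsilon> - 4 * r2"] by (simp add: power2_eq_square algebra_simps)
  moreover have "\<delta>1\<^sup>2 \<le> \<epsilon>\<^sup>2" using sep ee unfolding e_def by simp
  ultimately have "w \<le> - inner_n n (vsub u' v) v" using \<mu> cross by linarith
  thus ?thesis by linarith
qed

lemma measure_nested_decoder_le_outer:
  assumes \<sigma>: "\<sigma> > 0" and r1: "r1 > 0" and r2: "r2 > 0"
    and v: "inner_n n v v = r1\<^sup>2" and v': "inner_n n v' v' = r1\<^sup>2"
    and h': "inner_n n (vsub u' v') (vsub u' v') = r2\<^sup>2" and orth: "inner_n n (vsub u' v') v' = 0"
    and sep: "\<delta>1\<^sup>2 \<le> inner_n n (vsub v v') (vsub v v')"
    and cross: "2 * r2\<^sup>2 + 2 * \<sigma> * t * r1 \<le> 3/8 * \<delta>1\<^sup>2"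
  shows "measure (gauss_out n \<sigma> u') (nested_decoder n r1 r2 (\<sigma> * t) v u) \<le> Phi (- t)"
proof -
  let ?G = "gauss_out n \<sigma> u'"
  interpret prob_space ?G by (rule prob_space_gauss_out[OF \<sigma>])
  have no: "norm_n n v = r1" using norm_n_eqI[OF v] r1 by simp
  have "measure ?G (nested_decoder n r1 r2 (\<sigma> * t) v u) \<le> measure ?G (slab n v v (\<sigma> * norm_n n v * t))"
    unfolding nested_decoder_eq_slabs[OF r1 r2] no
    by (intro finite_measure_mono) (auto simp: mult_ac)
  also have "\<dots> \<le> Phi (- t)"
  proof (rule measure_gauss_out_slab_le[OF \<sigma>])
    show "inner_n n v v > 0" using v r1 by simp
    show "2 * (\<sigma> * norm_n n v * t) \<le> \<bar>inner_n n (vsub u' v) v\<bar>"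
      using outer_offset_ge[OF v v' h' orth _ sep] cross r2 no by (simp add: mult_ac)
  qed
  finally show ?thesis .
qed

lemma measure_nested_decoder_le_inner:
  assumes \<sigma>: "\<sigma> > 0" and r1: "r1 > 0" and r2: "r2 > 0"
    and h: "inner_n n (vsub u v) (vsub u v) = r2\<^sup>2" and h': "inner_n n (vsub u' v) (vsub u' v) = r2\<^sup>2"
    and sep: "\<delta>2\<^sup>2 \<le> inner_n n (vsub u u') (vsub u u')"
    and wide: "4 * \<sigma> * t * r2 \<le> \<delta>2\<^sup>2"
  shows "measure (gauss_out n \<sigma> u') (nested_decoder n r1 r2 (\<sigma> * t) v u) \<le> Phi (- t)"
proof -
  let ?G = "gauss_out n \<sigma> u'"
  interpret prob_space ?G by (rule prob_space_gauss_out[OF \<sigma>])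
  have nh: "norm_n n (vsub u v) = r2" using norm_n_eqI[OF h] r2 by simp
  have "measure ?G (nested_decoder n r1 r2 (\<sigma> * t) v u)
      \<le> measure ?G (slab n u (vsub u v) (\<sigma> * norm_n n (vsub u v) * t))"
    unfolding nested_decoder_eq_slabs[OF r1 r2] nh
    by (intro finite_measure_mono) (auto simp: mult_ac)
  also have "\<dots> \<le> Phi (- t)"
  proof (rule measure_gauss_out_slab_le[OF \<sigma>])
    show "inner_n n (vsub u v) (vsub u v) > 0" using h r2 by simp
    have "inner_n n (vsub u' u) (vsub u v) = - inner_n n (vsub u u') (vsub u u') / 2"
      using h h' unfolding inner_n_diff_self
      by (simp add: inner_n_diff_left inner_n_diff_right inner_n_commute)
    thus "2 * (\<sigma> * norm_n n (vsub u v) * t) \<le> \<bar>inner_n n (vsub u' u) (vsub u v)\<bar>"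
      using sep wide nh inner_n_self_nonneg[of n "vsub u u'"] by (simp add: mult_ac)
  qed
  finally show ?thesis .
qed

definition nested_arrangement :: "nat \<Rightarrow> real \<Rightarrow> real \<Rightarrow> real \<Rightarrow> real \<Rightarrow> nat \<Rightarrow> nat \<Rightarrow>
    (nat \<Rightarrow> nat \<Rightarrow> real) \<Rightarrow> (nat \<Rightarrow> nat \<Rightarrow> nat \<Rightarrow> real) \<Rightarrow> bool" where
  "nested_arrangement n r1 \<delta>1 r2 \<delta>2 N1 N2 o1 o2 \<longleftrightarrow>
     (\<forall>s1<N1. o1 s1 \<in> Rn n \<and> inner_n n (o1 s1) (o1 s1) = r1\<^sup>2) \<and>
     (\<forall>s1<N1. \<forall>s1'<N1. s1 \<noteq> s1' \<longrightarrow>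
        \<delta>1\<^sup>2 \<le> inner_n n (vsub (o1 s1) (o1 s1')) (vsub (o1 s1) (o1 s1'))) \<and>
     (\<forall>s1<N1. \<forall>s2<N2. o2 s1 s2 \<in> Rn n \<and>
        inner_n n (vsub (o2 s1 s2) (o1 s1)) (vsub (o2 s1 s2) (o1 s1)) = r2\<^sup>2 \<and>
        inner_n n (vsub (o2 s1 s2) (o1 s1)) (o1 s1) = 0) \<and>
     (\<forall>s1<N1. \<forall>s2<N2. \<forall>s2'<N2. s2 \<noteq> s2' \<longrightarrow>
        \<delta>2\<^sup>2 \<le> inner_n n (vsub (o2 s1 s2) (o2 s1 s2')) (vsub (o2 s1 s2) (o2 s1 s2')))"

lemma measure_nested_decoder_le:
  assumes \<sigma>: "\<sigma> > 0" and r1: "r1 > 0" and r2: "r2 > 0"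
    and arr: "nested_arrangement n r1 \<delta>1 r2 \<delta>2 N1 N2 o1 o2"
    and inner_sep: "4 * \<sigma> * t * r2 \<le> \<delta>2\<^sup>2"
    and outer_sep: "2 * r2\<^sup>2 + 2 * \<sigma> * t * r1 \<le> 3/8 * \<delta>1\<^sup>2"
    and s: "s1 < N1" "s2 < N2" "s1' < N1" "s2' < N2" and ne: "(s1, s2) \<noteq> (s1', s2')"
  shows "measure (gauss_out n \<sigma> (o2 s1' s2')) (nested_decoder n r1 r2 (\<sigma> * t) (o1 s1) (o2 s1 s2))
           \<le> Phi (- t)"
proof (cases "s1 = s1'")
  case True
  with ne have "s2 \<noteq> s2'" by simp
  with True s arr have "inner_n n (vsub (o2 s1 s2) (o1 s1)) (vsub (o2 s1 s2) (o1 s1)) = r2\<^sup>2"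
    "inner_n n (vsub (o2 s1 s2') (o1 s1)) (vsub (o2 s1 s2') (o1 s1)) = r2\<^sup>2"
    "\<delta>2\<^sup>2 \<le> inner_n n (vsub (o2 s1 s2) (o2 s1 s2')) (vsub (o2 s1 s2) (o2 s1 s2'))"
    unfolding nested_arrangement_def by auto
  from measure_nested_decoder_le_inner[OF \<sigma> r1 r2 this inner_sep] True show ?thesis by simp
next
  case False
  with s arr have "inner_n n (o1 s1) (o1 s1) = r1\<^sup>2" "inner_n n (o1 s1') (o1 s1') = r1\<^sup>2"
    "inner_n n (vsub (o2 s1' s2') (o1 s1')) (vsub (o2 s1' s2') (o1 s1')) = r2\<^sup>2"
    "inner_n n (vsub (o2 s1' s2') (o1 s1')) (o1 s1') = 0"
    "\<delta>1\<^sup>2 \<le> inner_n n (vsub (o1 s1) (o1 s1')) (vsub (o1 s1) (o1 s1'))"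
    unfolding nested_arrangement_def by auto
  from measure_nested_decoder_le_outer[OF \<sigma> r1 r2 this outer_sep] show ?thesis .
qed

lemma DI_code_nested_arrangement:
  assumes \<sigma>: "\<sigma> > 0" and r1: "r1 > 0" and r2: "r2 > 0"
    and arr: "nested_arrangement n r1 \<delta>1 r2 \<delta>2 N1 N2 o1 o2"
    and inner_sep: "4 * \<sigma> * t * r2 \<le> \<delta>2\<^sup>2"
    and outer_sep: "2 * r2\<^sup>2 + 2 * \<sigma> * t * r1 \<le> 3/8 * \<delta>1\<^sup>2"
    and power: "r1\<^sup>2 + r2\<^sup>2 \<le> real n * P"
  shows "DI_code n \<sigma> P ({..<N1} \<times> {..<N2}) (2 * (2 * Phi (- t))) (2 * Phi (- t))
           (\<lambda>(s1, s2). o2 s1 s2) (\<lambda>(s1, s2). nested_decoder n r1 r2 (\<sigma> * t) (o1 s1) (o2 s1 s2))"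
  unfolding DI_code_def split_paired_Ball_Sigma prod.case
proof (intro conjI ballI impI)
  fix s1 s2 assume "s1 \<in> {..<N1}" "s2 \<in> {..<N2}"
  with arr have o1: "inner_n n (o1 s1) (o1 s1) = r1\<^sup>2"
    and o2: "o2 s1 s2 \<in> Rn n" "inner_n n (vsub (o2 s1 s2) (o1 s1)) (vsub (o2 s1 s2) (o1 s1)) = r2\<^sup>2"
      "inner_n n (vsub (o2 s1 s2) (o1 s1)) (o1 s1) = 0"
    unfolding nested_arrangement_def by auto
  show "o2 s1 s2 \<in> Rn n" by (rule o2(1))
  show "(norm_n n (o2 s1 s2))\<^sup>2 \<le> real n * P"
    using inner_n_self_eq_orthogonal[OF o2(3)] o1 o2(2) power by (simp add: power2_norm_n)
  show "nested_decoder n r1 r2 (\<sigma> * t) (o1 s1) (o2 s1 s2) \<in> sets (gauss_out n \<sigma> (o2 s1 s2))"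
    unfolding nested_decoder_eq_slabs[OF r1 r2] by measurable
  show "1 - 2 * (2 * Phi (- t))
      \<le> measure (gauss_out n \<sigma> (o2 s1 s2)) (nested_decoder n r1 r2 (\<sigma> * t) (o1 s1) (o2 s1 s2))"
    by (rule measure_nested_decoder_ge[OF \<sigma> r1 r2 o1 o2(2,3)])
next
  fix s1 s2 s1' s2'
  assume "s1 \<in> {..<N1}" "s2 \<in> {..<N2}" "s1' \<in> {..<N1}" "s2' \<in> {..<N2}" "(s1, s2) \<noteq> (s1', s2')"
  hence "measure (gauss_out n \<sigma> (o2 s1' s2')) (nested_decoder n r1 r2 (\<sigma> * t) (o1 s1) (o2 s1 s2))
      \<le> Phi (- t)"
    by (intro measure_nested_decoder_le[OF \<sigma> r1 r2 arr inner_sep outer_sep]) auto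
  moreover have "0 \<le> Phi (- t)" unfolding Phi_def by simp
  ultimately show "measure (gauss_out n \<sigma> (o2 s1' s2'))
      (nested_decoder n r1 r2 (\<sigma> * t) (o1 s1) (o2 s1 s2)) \<le> 2 * Phi (- t)" by simp
qed simp

section \<open>Spherical codes from integer points\<close>

definition spherical_code :: "nat \<Rightarrow> real \<Rightarrow> real \<Rightarrow> (nat \<Rightarrow> real) set \<Rightarrow> bool" where
  "spherical_code m R \<delta> C \<longleftrightarrow> finite C \<and> C \<subseteq> Rn m \<and> (\<forall>x\<in>C. inner_n m x x = R\<^sup>2) \<and>
     (\<forall>x\<in>C. \<forall>y\<in>C. x \<noteq> y \<longrightarrow> \<delta>\<^sup>2 \<le> inner_n m (vsub x y) (vsub x y))"

lemma spherical_codeD: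
  assumes "spherical_code m R \<delta> C"
  shows "finite C" and "x \<in> C \<Longrightarrow> x \<in> Rn m" and "x \<in> C \<Longrightarrow> inner_n m x x = R\<^sup>2"
    and "x \<in> C \<Longrightarrow> y \<in> C \<Longrightarrow> x \<noteq> y \<Longrightarrow> \<delta>\<^sup>2 \<le> inner_n m (vsub x y) (vsub x y)"
  using assms unfolding spherical_code_def by auto

definition int_box :: "nat \<Rightarrow> int \<Rightarrow> (nat \<Rightarrow> int) set" where
  "int_box m q = PiE {..<m} (\<lambda>_. {-q..q})"

definition int_sqnorm :: "nat \<Rightarrow> (nat \<Rightarrow> int) \<Rightarrow> int" where
  "int_sqnorm m z = (\<Sum>i<m. (z i)\<^sup>2)"

lemma finite_int_box [simp]: "finite (int_box m q)"
  unfolding int_box_def by (auto intro: finite_PiE)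

lemma int_box_ext:
  assumes "z \<in> int_box m q" and "z' \<in> int_box m q" and "\<And>i. i < m \<Longrightarrow> z i = z' i"
  shows "z = z'"
  by (rule PiE_ext[OF assms(1,2)[unfolded int_box_def]]) (use assms(3) in auto)

lemma int_box_abs_le:
  assumes "z \<in> int_box m q" and "i < m"
  shows "\<bar>z i\<bar> \<le> q"
proof -
  have "z i \<in> {-q..q}" by (rule PiE_mem[OF assms(1)[unfolded int_box_def]]) (use assms(2) in simp)
  thus ?thesis by (simp add: abs_le_iff)
qed

lemma int_sqnorm_le:
  assumes "z \<in> int_box m q"
  shows "int_sqnorm m z \<le> int m * q\<^sup>2"
proof -
  have "(z i)\<^sup>2 \<le> q\<^sup>2" if "i < m" for i
    using power_mono[OF int_box_abs_le[OF assms that] abs_ge_zero, of 2] by simp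
  hence "int_sqnorm m z \<le> (\<Sum>i<m. q\<^sup>2)" unfolding int_sqnorm_def by (intro sum_mono) auto
  thus ?thesis by simp
qed

lemma int_sqnorm_ge_1:
  assumes "z \<in> int_box m q" and "z \<noteq> restrict (\<lambda>_. 0) {..<m}"
  shows "1 \<le> int_sqnorm m z"
proof -
  have "\<exists>i<m. z i \<noteq> 0"
  proof (rule ccontr)
    assume "\<not> (\<exists>i<m. z i \<noteq> 0)"
    hence "z = restrict (\<lambda>_. 0) {..<m}"
      using PiE_arb[OF assms(1)[unfolded int_box_def]] by (intro ext) auto
    thus False using assms(2) by simp
  qed
  then obtain i where i: "i < m" "z i \<noteq> 0" by blast
  have "1 \<le> \<bar>z i\<bar>" using i(2) by linarith
  hence "1 \<le> (z i)\<^sup>2" using power_mono[of 1 "\<bar>z i\<bar>" 2] by simp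
  also have "\<dots> \<le> int_sqnorm m z" unfolding int_sqnorm_def by (rule member_le_sum) (use i in auto)
  finally show ?thesis .
qed

lemma int_sqnorm_diff_commute: "int_sqnorm m (\<lambda>i. z i - z' i) = int_sqnorm m (\<lambda>i. z' i - z i)"
  unfolding int_sqnorm_def by (rule sum.cong) (auto simp: power2_commute)

lemma sum_half_power_abs: "(\<Sum>k\<in>{-int N..int N}. (1/2::real) ^ nat \<bar>k\<bar>) = 3 - 2 * (1/2) ^ N"
proof (induction N)
  case (Suc N)
  have e: "{-int (Suc N)..int (Suc N)} = insert (int (Suc N)) (insert (- int (Suc N)) {-int N..int N})"
    by auto
  have "(\<Sum>k\<in>{-int (Suc N)..int (Suc N)}. (1/2::real) ^ nat \<bar>k\<bar>)
      = (1/2) ^ Suc N + ((1/2) ^ Suc N + (\<Sum>k\<in>{-int N..int N}. (1/2::real) ^ nat \<bar>k\<bar>))"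
    unfolding e by (subst sum.insert; simp add: nat_add_distrib)+
  with Suc show ?case by simp
qed simp

lemma sum_half_power_square_le:
  assumes "M \<ge> 0"
  shows "(\<Sum>k\<in>{-M..M}. (1/2::real) ^ nat (k\<^sup>2)) \<le> 3"
proof -
  obtain N where N: "M = int N" using assms nonneg_eq_int by blast
  have "(\<Sum>k\<in>{-M..M}. (1/2::real) ^ nat (k\<^sup>2)) \<le> (\<Sum>k\<in>{-M..M}. (1/2::real) ^ nat \<bar>k\<bar>)"
  proof (rule sum_mono)
    fix k :: int
    have "\<bar>k\<bar> \<le> k\<^sup>2"
    proof (cases "k = 0")
      case False
      hence "\<bar>k\<bar> * 1 \<le> \<bar>k\<bar> * \<bar>k\<bar>" by (intro mult_left_mono) auto
      thus ?thesis by (simp add: power2_eq_square abs_mult_self_eq)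
    qed simp
    thus "(1/2::real) ^ nat (k\<^sup>2) \<le> (1/2) ^ nat \<bar>k\<bar>" by (intro power_decreasing) auto
  qed
  also have "\<dots> = 3 - 2 * (1/2) ^ N" unfolding N by (rule sum_half_power_abs)
  also have "\<dots> \<le> 3" by simp
  finally show ?thesis .
qed

text \<open>Each point with squared norm at most L has weight 2^L (1/2)^|w|^2 \<ge> 1, and the total
  weight of the box factorises over the coordinates.\<close>

lemma card_int_box_sqnorm_le:
  assumes M: "M \<ge> 0"
  shows "real (card {w \<in> int_box m M. int_sqnorm m w \<le> int L}) \<le> 2 ^ L * 3 ^ m"
proof -
  let ?W = "{w \<in> int_box m M. int_sqnorm m w \<le> int L}"
  let ?g = "\<lambda>w. (2::real) ^ L * (\<Prod>i<m. (1/2::real) ^ nat ((w i)\<^sup>2))"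
  have "1 \<le> ?g w" if w: "w \<in> ?W" for w
  proof -
    have "int (\<Sum>i<m. nat ((w i)\<^sup>2)) = int_sqnorm m w" unfolding int_sqnorm_def by (simp add: of_nat_sum)
    hence "int (\<Sum>i<m. nat ((w i)\<^sup>2)) \<le> int L" using w by simp
    hence "(\<Sum>i<m. nat ((w i)\<^sup>2)) \<le> L" by (simp only: of_nat_le_iff)
    hence "(1/2::real) ^ L \<le> (\<Prod>i<m. (1/2::real) ^ nat ((w i)\<^sup>2))"
      unfolding power_sum[symmetric] by (intro power_decreasing) auto
    hence "(2::real) ^ L * (1/2) ^ L \<le> ?g w" by simp
    thus ?thesis by (simp add: power_mult_distrib[symmetric])
  qed
  hence "real (card ?W) \<le> (\<Sum>w\<in>?W. ?g w)"
    using sum_mono[of ?W "\<lambda>_. 1" ?g] by simp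
  also have "\<dots> \<le> (\<Sum>w\<in>int_box m M. ?g w)"
    by (rule sum_mono2) (auto intro!: mult_nonneg_nonneg prod_nonneg)
  also have "\<dots> = 2 ^ L * (\<Prod>i<m. \<Sum>k\<in>{-M..M}. (1/2::real) ^ nat (k\<^sup>2))"
    unfolding int_box_def sum_distrib_left[symmetric] by (subst prod_sum_PiE) auto
  also have "\<dots> \<le> 2 ^ L * (\<Prod>i<m. 3)"
    by (intro mult_left_mono prod_mono) (use sum_half_power_square_le[OF M] in \<open>auto intro: sum_nonneg\<close>)
  finally show ?thesis by simp
qed

lemma exists_maximal_separated_subset:
  assumes "finite S" and sym: "\<And>x y. F x y = F y x"
  shows "\<exists>C\<subseteq>S. (\<forall>x\<in>C. \<forall>y\<in>C. x \<noteq> y \<longrightarrow> F x y) \<and> (\<forall>z\<in>S. \<exists>c\<in>C. z = c \<or> \<not> F z c)"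
  using assms(1)
proof (induction S rule: finite_induct)
  case (insert a S)
  then obtain C where C: "C \<subseteq> S" "\<forall>x\<in>C. \<forall>y\<in>C. x \<noteq> y \<longrightarrow> F x y"
      "\<forall>z\<in>S. \<exists>c\<in>C. z = c \<or> \<not> F z c"
    by blast
  show ?case
  proof (cases "\<forall>c\<in>C. F a c")
    case True
    thus ?thesis using C sym by (intro exI[of _ "insert a C"]) auto
  next
    case False
    thus ?thesis using C by (intro exI[of _ C]) auto
  qed
qed simp

text \<open>Pigeonhole: the (2q + 1)^m - 1 nonzero points of the cube lie on m q^2 shells.\<close>

lemma exists_rich_int_shell:
  assumes m: "m \<ge> 1" and q: "q \<ge> 1"
  obtains K where "1 \<le> K" "K \<le> int m * q\<^sup>2"
    "(2 * q) ^ m \<le> int m * q\<^sup>2 * int (card {z \<in> int_box m q. int_sqnorm m z = K})"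
proof -
  define zero :: "nat \<Rightarrow> int" where "zero = restrict (\<lambda>_. 0) {..<m}"
  define Ks where "Ks = {1..int m * q\<^sup>2}"
  define S where "S K = {z \<in> int_box m q. int_sqnorm m z = K}" for K
  have "(1::int) * 1 \<le> int m * q\<^sup>2" using m q by (intro mult_mono) (auto simp: one_le_power)
  hence Ks: "finite Ks" "Ks \<noteq> {}" unfolding Ks_def by auto
  have "Max ((\<lambda>K. card (S K)) ` Ks) \<in> (\<lambda>K. card (S K)) ` Ks" using Ks by (intro Max_in) auto
  then obtain K0 where K0: "K0 \<in> Ks" "card (S K0) = Max ((\<lambda>K. card (S K)) ` Ks)"
    by (auto simp only: image_iff)
  have "int_box m q - {zero} \<subseteq> (\<Union>K\<in>Ks. S K)"
  proof
    fix z assume z: "z \<in> int_box m q - {zero}"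
    hence "int_sqnorm m z \<in> Ks"
      unfolding Ks_def using int_sqnorm_ge_1[of z m q] int_sqnorm_le[of z m q] zero_def by auto
    thus "z \<in> (\<Union>K\<in>Ks. S K)" unfolding S_def using z by auto
  qed
  hence "card (int_box m q - {zero}) \<le> card (\<Union>K\<in>Ks. S K)"
    by (rule card_mono[rotated]) (use Ks in \<open>auto simp: S_def\<close>)
  also have "\<dots> \<le> (\<Sum>K\<in>Ks. card (S K))" by (rule card_UN_le[OF Ks(1)])
  also have "\<dots> \<le> (\<Sum>K\<in>Ks. card (S K0))" by (intro sum_mono) (use K0 Ks in simp)
  also have "\<dots> = nat (int m * q\<^sup>2) * card (S K0)" unfolding Ks_def by simp
  finally have "int (card (int_box m q - {zero})) \<le> int (nat (int m * q\<^sup>2) * card (S K0))"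
    by (simp only: of_nat_le_iff)
  also have "\<dots> = int m * q\<^sup>2 * int (card (S K0))" by (simp add: of_nat_mult)
  finally have "int (card (int_box m q - {zero})) \<le> int m * q\<^sup>2 * int (card (S K0))" .
  moreover have "zero \<in> int_box m q" unfolding zero_def int_box_def using q by auto
  hence "int (card (int_box m q - {zero})) = (2 * q + 1) ^ m - 1"
    unfolding int_box_def using q by (simp add: card_PiE card_Diff_singleton of_nat_diff)
  moreover have "(2 * q) ^ m < (2 * q + 1) ^ m" using m q by (intro power_strict_mono) auto
  ultimately show ?thesis using that[of K0] K0(1) unfolding Ks_def S_def by auto
qed

lemma card_int_box_near_le:
  assumes c: "c \<in> int_box m q" and q: "q \<ge> 0"
  shows "card {z \<in> int_box m q. int_sqnorm m (\<lambda>i. z i - c i) \<le> int (4 * m)} \<le> 48 ^ m"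
proof -
  define W where "W = {w \<in> int_box m (2 * q). int_sqnorm m w \<le> int (4 * m)}"
  let ?N = "{z \<in> int_box m q. int_sqnorm m (\<lambda>i. z i - c i) \<le> int (4 * m)}"
  let ?f = "\<lambda>z. restrict (\<lambda>i. z i - c i) {..<m}"
  have "card ?N \<le> card W"
  proof (rule card_inj_on_le)
    show "inj_on ?f ?N"
    proof (rule inj_onI)
      fix z z' assume "z \<in> ?N" "z' \<in> ?N" and e: "?f z = ?f z'"
      hence "z \<in> int_box m q" "z' \<in> int_box m q" by auto
      thus "z = z'"
      proof (rule int_box_ext)
        show "z i = z' i" if "i < m" for i using fun_cong[OF e, of i] that by simp
      qed
    qed
    show "?f ` ?N \<subseteq> W"
    proof clarify
      fix z assume z: "z \<in> int_box m q" "int_sqnorm m (\<lambda>i. z i - c i) \<le> int (4 * m)"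
      have "z i - c i \<in> {-(2 * q)..2 * q}" if "i < m" for i
        using int_box_abs_le[OF z(1) that] int_box_abs_le[OF c that] by (simp add: abs_le_iff)
      hence "?f z \<in> int_box m (2 * q)"
        unfolding int_box_def by (intro restrict_PiE_iff[THEN iffD2] ballI) simp
      moreover have "int_sqnorm m (?f z) = int_sqnorm m (\<lambda>i. z i - c i)"
        unfolding int_sqnorm_def by simp
      ultimately show "?f z \<in> W" using z(2) unfolding W_def by simp
    qed
  qed (simp add: W_def)
  also have "card W \<le> 48 ^ m"
  proof -
    have "real (card W) \<le> 2 ^ (4 * m) * 3 ^ m"
      unfolding W_def using q by (intro card_int_box_sqnorm_le) simp
    also have "\<dots> = real (48 ^ m)" by (simp add: power_mult power_mult_distrib[symmetric])
    finally show ?thesis by (simp only: of_nat_le_iff)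
  qed
  finally show ?thesis .
qed

text \<open>A maximal T-separated subset C of A covers A by the sets of points at squared distance
  less than T from its elements, each of which is small once T \<le> 4m.\<close>

lemma exists_separated_int_subset:
  assumes A: "A \<subseteq> int_box m q" and q: "q \<ge> 0" and T: "T \<le> 4 * real m"
  obtains C where "C \<subseteq> A"
    "\<And>z z'. z \<in> C \<Longrightarrow> z' \<in> C \<Longrightarrow> z \<noteq> z' \<Longrightarrow> T \<le> real_of_int (int_sqnorm m (\<lambda>i. z i - z' i))"
    "card A \<le> card C * 48 ^ m"
proof -
  define far where "far z z' \<longleftrightarrow> T \<le> real_of_int (int_sqnorm m (\<lambda>i. z i - z' i))" for z z'
  have fA: "finite A" using A finite_subset finite_int_box by blast
  obtain C where C: "C \<subseteq> A" "\<forall>z\<in>C. \<forall>z'\<in>C. z \<noteq> z' \<longrightarrow> far z z'"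
      "\<forall>z\<in>A. \<exists>c\<in>C. z = c \<or> \<not> far z c"
    using exists_maximal_separated_subset[OF fA, of far] int_sqnorm_diff_commute
    unfolding far_def by metis
  have fC: "finite C" using C(1) fA finite_subset by blast
  have near: "card {z \<in> A. z = c \<or> \<not> far z c} \<le> 48 ^ m" if c: "c \<in> C" for c
  proof -
    have "{z \<in> A. z = c \<or> \<not> far z c} \<subseteq> {z \<in> int_box m q. int_sqnorm m (\<lambda>i. z i - c i) \<le> int (4 * m)}"
    proof
      fix z assume "z \<in> {z \<in> A. z = c \<or> \<not> far z c}"
      hence z: "z \<in> A" "z = c \<or> \<not> far z c" by auto
      have "int_sqnorm m (\<lambda>i. z i - c i) \<le> int (4 * m)"
      proof (cases "z = c")
        case False
        hence "real_of_int (int_sqnorm m (\<lambda>i. z i - c i)) < real_of_int (int (4 * m))"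
          using z(2) T unfolding far_def by simp
        thus ?thesis by (simp only: of_int_less_iff less_imp_le)
      qed (simp add: int_sqnorm_def)
      with z(1) A show "z \<in> {z \<in> int_box m q. int_sqnorm m (\<lambda>i. z i - c i) \<le> int (4 * m)}"
        by blast
    qed
    hence "card {z \<in> A. z = c \<or> \<not> far z c}
        \<le> card {z \<in> int_box m q. int_sqnorm m (\<lambda>i. z i - c i) \<le> int (4 * m)}"
      by (rule card_mono[rotated]) simp
    also have "\<dots> \<le> 48 ^ m" using c C(1) A q by (intro card_int_box_near_le) auto
    finally show ?thesis .
  qed
  have "A \<subseteq> (\<Union>c\<in>C. {z \<in> A. z = c \<or> \<not> far z c})" using C(3) by blast
  hence "card A \<le> card (\<Union>c\<in>C. {z \<in> A. z = c \<or> \<not> far z c})"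
    by (rule card_mono[rotated]) (use fC fA in auto)
  also have "\<dots> \<le> (\<Sum>c\<in>C. card {z \<in> A. z = c \<or> \<not> far z c})" by (rule card_UN_le[OF fC])
  also have "\<dots> \<le> (\<Sum>c\<in>C. 48 ^ m)" using near by (intro sum_mono) force
  also have "\<dots> = card C * 48 ^ m" by simp
  finally show ?thesis using that C unfolding far_def by blast
qed

lemma spherical_code_scaled_int_shell:
  fixes m :: nat and R :: real and K :: int
  defines "\<phi> \<equiv> \<lambda>z. restrict (\<lambda>i. R / sqrt K * real_of_int (z i)) {..<m}"
  assumes C: "C \<subseteq> int_box m q" and K: "K > 0" and R: "R > 0"
    and shell: "\<And>z. z \<in> C \<Longrightarrow> int_sqnorm m z = K"
    and sep: "\<And>z z'. z \<in> C \<Longrightarrow> z' \<in> C \<Longrightarrow> z \<noteq> z' \<Longrightarrow>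
        \<delta>\<^sup>2 * real_of_int K / R\<^sup>2 \<le> real_of_int (int_sqnorm m (\<lambda>i. z i - z' i))"
  shows "spherical_code m R \<delta> (\<phi> ` C)" and "card (\<phi> ` C) = card C"
proof -
  define s where "s = R / sqrt K"
  have s: "s > 0" and s2: "s\<^sup>2 = R\<^sup>2 / real_of_int K"
    unfolding s_def using R K by (simp_all add: power_divide)
  have \<phi>_diff: "inner_n m (vsub (\<phi> z) (\<phi> z')) (vsub (\<phi> z) (\<phi> z'))
      = s\<^sup>2 * real_of_int (int_sqnorm m (\<lambda>i. z i - z' i))" for z z'
    unfolding inner_n_def vsub_def \<phi>_def s_def[symmetric] int_sqnorm_def
    by (simp add: sum_distrib_left power2_eq_square algebra_simps)
  have \<phi>_norm: "inner_n m (\<phi> z) (\<phi> z) = s\<^sup>2 * real_of_int (int_sqnorm m z)" for z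
    unfolding inner_n_def \<phi>_def s_def[symmetric] int_sqnorm_def
    by (simp add: sum_distrib_left power2_eq_square algebra_simps)
  have "finite C" using C finite_subset finite_int_box by blast
  moreover have "inj_on \<phi> C"
  proof (rule inj_onI)
    fix z z' assume "z \<in> C" "z' \<in> C" and e: "\<phi> z = \<phi> z'"
    show "z = z'"
    proof (rule int_box_ext[of z m q z'])
      show "z \<in> int_box m q" "z' \<in> int_box m q" using \<open>z \<in> C\<close> \<open>z' \<in> C\<close> C by auto
      show "z i = z' i" if "i < m" for i
        using fun_cong[OF e, of i] that s unfolding \<phi>_def s_def[symmetric] by simp
    qed
  qed
  ultimately show "card (\<phi> ` C) = card C" by (simp add: card_image)
  show "spherical_code m R \<delta> (\<phi> ` C)"
    unfolding spherical_code_def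
  proof (intro conjI ballI impI)
    show "finite (\<phi> ` C)" using \<open>finite C\<close> by simp
    show "\<phi> ` C \<subseteq> Rn m" unfolding \<phi>_def by auto
  next
    fix x assume "x \<in> \<phi> ` C"
    then obtain z where "z \<in> C" "x = \<phi> z" by blast
    thus "inner_n m x x = R\<^sup>2" using shell \<phi>_norm s2 K by simp
  next
    fix x y assume "x \<in> \<phi> ` C" "y \<in> \<phi> ` C" and "x \<noteq> y"
    then obtain z z' where z: "z \<in> C" "x = \<phi> z" and z': "z' \<in> C" "y = \<phi> z'" and "z \<noteq> z'"
      by blast
    hence "s\<^sup>2 * (\<delta>\<^sup>2 * real_of_int K / R\<^sup>2) \<le> s\<^sup>2 * real_of_int (int_sqnorm m (\<lambda>i. z i - z' i))"
      using sep by (intro mult_left_mono) auto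
    thus "\<delta>\<^sup>2 \<le> inner_n m (vsub x y) (vsub x y)"
      unfolding z z' \<phi>_diff s2 using K R by (simp add: field_simps)
  qed
qed

text \<open>The integer shell of squared radius K \<le> m q^2 with q = ceiling (R/\<delta>), rescaled to radius R, is
  thinned to squared separation \<delta>^2, which is at most 4m in lattice units.\<close>

lemma exists_spherical_code:
  assumes m: "m \<ge> 1" and \<delta>: "0 < \<delta>" and \<delta>R: "\<delta> \<le> R"
  obtains C where "spherical_code m R \<delta> C"
    "(2 * R / \<delta>) ^ m \<le> real (card C) * 48 ^ m * (real m * (R / \<delta> + 1)\<^sup>2)"
proof -
  have R: "R > 0" using \<delta> \<delta>R by simp
  define q where "q = \<lceil>R / \<delta>\<rceil>"
  have q1: "R / \<delta> \<le> real_of_int q" and q2: "real_of_int q \<le> R / \<delta> + 1"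
    unfolding q_def by linarith+
  have "1 \<le> R / \<delta>" using \<delta> \<delta>R by simp
  hence q: "q \<ge> 1" using q1 by linarith
  obtain K where K: "1 \<le> K" "K \<le> int m * q\<^sup>2"
    and rich: "(2 * q) ^ m \<le> int m * q\<^sup>2 * int (card {z \<in> int_box m q. int_sqnorm m z = K})"
    using exists_rich_int_shell[OF m q] by blast
  define A where "A = {z \<in> int_box m q. int_sqnorm m z = K}"
  have "real_of_int K \<le> real_of_int (int m * q\<^sup>2)" using K(2) by (simp only: of_int_le_iff)
  also have "\<dots> = real m * (real_of_int q)\<^sup>2" by simp
  also have "\<dots> \<le> real m * (2 * R / \<delta>)\<^sup>2"
    using q1 q2 \<open>1 \<le> R / \<delta>\<close> q by (intro mult_left_mono power_mono) auto
  finally have "\<delta>\<^sup>2 * real_of_int K \<le> \<delta>\<^sup>2 * (real m * (2 * R / \<delta>)\<^sup>2)" by (intro mult_left_mono) auto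
  hence T: "\<delta>\<^sup>2 * real_of_int K / R\<^sup>2 \<le> 4 * real m"
    using \<delta> R by (simp add: field_simps power2_eq_square)
  have Abox: "A \<subseteq> int_box m q" unfolding A_def by blast
  have "0 \<le> q" using q by simp
  obtain C' where C': "C' \<subseteq> A"
    and sep: "\<And>z z'. z \<in> C' \<Longrightarrow> z' \<in> C' \<Longrightarrow> z \<noteq> z' \<Longrightarrow>
        \<delta>\<^sup>2 * real_of_int K / R\<^sup>2 \<le> real_of_int (int_sqnorm m (\<lambda>i. z i - z' i))"
    and card: "card A \<le> card C' * 48 ^ m"
    by (rule exists_separated_int_subset[OF Abox \<open>0 \<le> q\<close> T]) blast
  have "C' \<subseteq> int_box m q" using C' Abox by blast
  moreover have "int_sqnorm m z = K" if "z \<in> C'" for z using C' that unfolding A_def by blast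
  moreover have "K > 0" using K by simp
  moreover define \<phi> where "\<phi> = (\<lambda>z. restrict (\<lambda>i. R / sqrt K * real_of_int (z i)) {..<m})"
  ultimately have code: "spherical_code m R \<delta> (\<phi> ` C')" and card_code: "card (\<phi> ` C') = card C'"
    using spherical_code_scaled_int_shell[OF _ _ R _ sep] unfolding \<phi>_def by blast+
  have "(2 * R / \<delta>) ^ m \<le> (2 * real_of_int q) ^ m"
    using q1 \<delta> R by (intro power_mono) (auto simp: field_simps)
  also have "\<dots> = real_of_int ((2 * q) ^ m)" by simp
  also have "\<dots> \<le> real_of_int (int m * q\<^sup>2 * int (card A))"
    using rich unfolding A_def by (simp only: of_int_le_iff)
  also have "\<dots> = real m * (real_of_int q)\<^sup>2 * real (card A)" by simp
  also have "\<dots> \<le> real m * (R / \<delta> + 1)\<^sup>2 * (real (card C') * 48 ^ m)"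
  proof (rule mult_mono)
    show "real m * (real_of_int q)\<^sup>2 \<le> real m * (R / \<delta> + 1)\<^sup>2"
      using q2 q by (intro mult_left_mono power_mono) auto
    have "real (card A) \<le> real (card C' * 48 ^ m)" using card by (simp only: of_nat_le_iff)
    thus "real (card A) \<le> real (card C') * 48 ^ m" by simp
  qed auto
  finally show ?thesis
    using that[OF code] card_code by (simp add: mult_ac)
qed

definition code_size_bound :: "real \<Rightarrow> real \<Rightarrow> real" where
  "code_size_bound m \<rho> = (m - 2) * log 2 \<rho> - 5 * m - 2 - log 2 m"

lemma code_size_bound_le_log:
  assumes \<rho>: "1 \<le> \<rho>" and m: "1 \<le> m"
    and N: "(2 * \<rho>) ^ m \<le> real N * 48 ^ m * (real m * (\<rho> + 1)\<^sup>2)"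
  shows "0 < N" and "code_size_bound (real m) \<rho> \<le> log 2 (real N)"
proof -
  have "(\<rho> + 1)\<^sup>2 \<le> (2 * \<rho>)\<^sup>2" using \<rho> by (intro power_mono) auto
  hence "real N * 48 ^ m * (real m * (\<rho> + 1)\<^sup>2) \<le> real N * 48 ^ m * (real m * (2 * \<rho>)\<^sup>2)"
    by (intro mult_left_mono) auto
  with N have N': "(2 * \<rho>) ^ m \<le> real N * 48 ^ m * real m * (4 * \<rho>\<^sup>2)"
    by (simp add: power_mult_distrib mult_ac)
  moreover have pos: "0 < (2 * \<rho>) ^ m" using \<rho> by simp
  ultimately show "0 < N" by (cases N) auto
  have "real m * (1 + log 2 \<rho>) = log 2 ((2 * \<rho>) ^ m)"
    using \<rho> by (simp add: log_nat_power log_mult algebra_simps)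
  also have "\<dots> \<le> log 2 (real N * 48 ^ m * real m * (4 * \<rho>\<^sup>2))"
    using N' pos by (intro log_mono) auto
  also have "\<dots> = log 2 (real N) + real m * log 2 48 + log 2 (real m) + 2 + 2 * log 2 \<rho>"
  proof -
    have "log 2 (4::real) = 2" using log_nat_power[of "2::real" 2 2] by simp
    thus ?thesis using \<open>0 < N\<close> m \<rho> by (simp add: log_mult log_nat_power)
  qed
  also have "real m * log 2 48 \<le> real m * 6"
  proof (intro mult_left_mono)
    have "log 2 (48::real) \<le> log 2 (2 ^ 6)" by (subst log_le_cancel_iff) auto
    also have "\<dots> = 6" by (subst log_nat_power) auto
    finally show "log 2 (48::real) \<le> 6" .
  qed simp
  finally show "code_size_bound (real m) \<rho> \<le> log 2 (real N)"
    unfolding code_size_bound_def by (simp add: algebra_simps)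
qed

lemma exists_spherical_code_log_card:
  assumes m: "m \<ge> 1" and \<delta>: "0 < \<delta>" and \<delta>R: "\<delta> \<le> R"
  obtains C where "spherical_code m R \<delta> C" and "0 < card C"
    and "code_size_bound (real m) (R / \<delta>) \<le> log 2 (real (card C))"
proof -
  obtain C where C: "spherical_code m R \<delta> C"
    and N: "(2 * R / \<delta>) ^ m \<le> real (card C) * 48 ^ m * (real m * (R / \<delta> + 1)\<^sup>2)"
    using exists_spherical_code[OF m \<delta> \<delta>R] by blast
  have "1 \<le> R / \<delta>" using \<delta> \<delta>R by simp
  from code_size_bound_le_log[OF this m] N have "0 < card C"
    and "code_size_bound (real m) (R / \<delta>) \<le> log 2 (real (card C))"
    by simp_all
  with C that show ?thesis by blast
qed

section \<open>Placing the inner codes orthogonally\<close>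

definition householder :: "nat \<Rightarrow> (nat \<Rightarrow> real) \<Rightarrow> (nat \<Rightarrow> real) \<Rightarrow> (nat \<Rightarrow> real)" where
  "householder n v a = restrict (\<lambda>i. a i - 2 * inner_n n v a / inner_n n v v * v i) {..<n}"

lemma inner_n_householder:
  "inner_n n (householder n v a) (householder n v b) = inner_n n a b"
proof -
  define \<alpha> where "\<alpha> = 2 * inner_n n v a / inner_n n v v"
  define \<beta> where "\<beta> = 2 * inner_n n v b / inner_n n v v"
  have "inner_n n (householder n v a) (householder n v b) =
      inner_n n (\<lambda>i. a i - \<alpha> * v i) (\<lambda>i. b i - \<beta> * v i)"
    unfolding householder_def \<alpha>_def \<beta>_def by simp
  also have "\<dots> = inner_n n a b - \<beta> * inner_n n a v - \<alpha> * inner_n n v b + \<alpha> * \<beta> * inner_n n v v"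
    unfolding inner_n_def by (simp add: algebra_simps sum.distrib sum_subtractf sum_distrib_left)
  also have "\<dots> = inner_n n a b"
    unfolding \<alpha>_def \<beta>_def
    by (cases "inner_n n v v = 0") (simp_all add: field_simps inner_n_commute[of n a v] power2_eq_square)
  finally show ?thesis .
qed

text \<open>For |p| = r the reflection along p - r e_0 exchanges r e_0 and p, so it maps the hyperplane
  of vectors with vanishing 0-th coordinate onto the orthogonal complement of p.\<close>

lemma inner_n_householder_axis:
  assumes n: "n \<ge> 1" and p: "inner_n n p p = r\<^sup>2"
  defines "v \<equiv> \<lambda>i. p i - (if i = 0 then r else 0)"
  shows "inner_n n (householder n v a) p = r * a 0"
proof -
  have e0: "inner_n n (\<lambda>i. if i = 0 then r else 0) x = r * x 0" for x
  proof -
    have "inner_n n (\<lambda>i. if i = 0 then r else 0) x = (\<Sum>i<n. if i = 0 then r * x i else 0)"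
      unfolding inner_n_def by (rule sum.cong) auto
    thus ?thesis using n by (simp add: sum.delta)
  qed
  have v: "inner_n n v x = inner_n n p x - r * x 0" for x
    unfolding v_def using inner_n_diff_left[of n p "\<lambda>i. if i = 0 then r else 0" x] e0
    by (simp add: vsub_def)
  have vp: "inner_n n v p = r\<^sup>2 - r * p 0" using v p by simp
  have v0: "v 0 = p 0 - r" unfolding v_def by simp
  have vv: "inner_n n v v = 2 * (r\<^sup>2 - r * p 0)"
    using v[of v] vp inner_n_commute[of n p v] unfolding v0 by (simp add: power2_eq_square algebra_simps)
  have "inner_n n (householder n v a) p
      = inner_n n (vsub a (\<lambda>i. 2 * inner_n n v a / inner_n n v v * v i)) p"
    unfolding householder_def vsub_def by simp
  also have "\<dots> = inner_n n a p - 2 * inner_n n v a / inner_n n v v * inner_n n v p"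
    by (simp only: inner_n_diff_left inner_n_scale_left)
  also have "\<dots> = r * a 0"
  proof (cases "inner_n n v v = 0")
    case True
    hence "\<forall>i<n. v i = 0"
      unfolding inner_n_def by (subst (asm) sum_nonneg_eq_0_iff) auto
    hence "inner_n n v a = 0" unfolding inner_n_def by simp
    thus ?thesis using True v[of a] by (simp add: inner_n_commute)
  next
    case False
    hence "2 * inner_n n v a / inner_n n v v * inner_n n v p = inner_n n v a"
      unfolding vv vp by (simp add: field_simps)
    thus ?thesis using v[of a] inner_n_commute[of n a p] by simp
  qed
  finally show ?thesis .
qed

definition prepend_zero :: "nat \<Rightarrow> (nat \<Rightarrow> real) \<Rightarrow> (nat \<Rightarrow> real)" where
  "prepend_zero n w = restrict (\<lambda>i. if i = 0 then 0 else w (i - 1)) {..<n}"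

lemma inner_n_prepend_zero:
  assumes "n \<ge> 1"
  shows "inner_n n (prepend_zero n w) (prepend_zero n w') = inner_n (n - 1) w w'"
proof -
  obtain k where k: "n = Suc k" using assms by (cases n) auto
  have "inner_n n (prepend_zero n w) (prepend_zero n w')
      = (\<Sum>i<Suc k. (if i = 0 then 0 else w (i - 1)) * (if i = 0 then 0 else w' (i - 1)))"
    unfolding inner_n_def prepend_zero_def k by (rule sum.cong) auto
  also have "\<dots> = (\<Sum>i<k. w i * w' i)" by (subst sum.lessThan_Suc_shift) simp
  finally show ?thesis unfolding inner_n_def k by simp
qed

text \<open>The inner code, living in dimension n - 1, is placed in the hyperplane through o1 s1
  orthogonal to o1 s1 by prepending a zero coordinate and applying the Householder reflection
  that sends r1 e_0 to o1 s1.\<close>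

lemma exists_nested_arrangement:
  assumes n: "n \<ge> 1" and C1: "spherical_code n r1 \<delta>1 C1" and C2: "spherical_code (n - 1) r2 \<delta>2 C2"
  obtains o1 o2 where "nested_arrangement n r1 \<delta>1 r2 \<delta>2 (card C1) (card C2) o1 o2"
proof -
  obtain o1 h where o1: "bij_betw o1 {..<card C1} C1" and h: "bij_betw h {..<card C2} C2"
    using ex_bij_betw_nat_finite spherical_codeD(1)[OF C1] spherical_codeD(1)[OF C2]
    unfolding atLeast0LessThan by metis
  have o1C: "o1 s1 \<in> C1" if "s1 < card C1" for s1 using o1 that by (auto dest: bij_betwE)
  have hC: "h s2 \<in> C2" if "s2 < card C2" for s2 using h that by (auto dest: bij_betwE)
  define w where "w s1 s2 = householder n (\<lambda>i. o1 s1 i - (if i = 0 then r1 else 0)) (prepend_zero n (h s2))"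
    for s1 s2
  define o2 where "o2 s1 s2 = restrict (\<lambda>i. o1 s1 i + w s1 s2 i) {..<n}" for s1 s2
  have diff: "inner_n n (vsub (o2 s1 s2) (o1 s1)) x = inner_n n (w s1 s2) x"
    and diff_self: "inner_n n (vsub (o2 s1 s2) (o1 s1)) (vsub (o2 s1 s2) (o1 s1))
      = inner_n n (w s1 s2) (w s1 s2)"
    and diff_diff: "inner_n n (vsub (o2 s1 s2) (o2 s1 s2')) (vsub (o2 s1 s2) (o2 s1 s2'))
      = inner_n n (vsub (w s1 s2) (w s1 s2')) (vsub (w s1 s2) (w s1 s2'))"
    for s1 s2 s2' x
    by (rule inner_n_cong; simp add: o2_def vsub_def)+
  have w: "inner_n n (w s1 s2) (w s1 s2') = inner_n (n - 1) (h s2) (h s2')" for s1 s2 s2'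
    unfolding w_def inner_n_householder by (rule inner_n_prepend_zero[OF n])
  have "\<forall>s1<card C1. o1 s1 \<in> Rn n \<and> inner_n n (o1 s1) (o1 s1) = r1\<^sup>2"
    using spherical_codeD(2,3)[OF C1] o1C by simp
  moreover have "\<delta>1\<^sup>2 \<le> inner_n n (vsub (o1 s1) (o1 s1')) (vsub (o1 s1) (o1 s1'))"
    if "s1 < card C1" "s1' < card C1" "s1 \<noteq> s1'" for s1 s1'
  proof (rule spherical_codeD(4)[OF C1 o1C o1C])
    show "o1 s1 \<noteq> o1 s1'" using o1 that unfolding bij_betw_def inj_on_def by blast
  qed (use that in simp_all)
  moreover have "o2 s1 s2 \<in> Rn n \<and>
      inner_n n (vsub (o2 s1 s2) (o1 s1)) (vsub (o2 s1 s2) (o1 s1)) = r2\<^sup>2 \<and>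
      inner_n n (vsub (o2 s1 s2) (o1 s1)) (o1 s1) = 0"
    if s1: "s1 < card C1" and s2: "s2 < card C2" for s1 s2
  proof (intro conjI)
    show "o2 s1 s2 \<in> Rn n" unfolding o2_def by simp
    show "inner_n n (vsub (o2 s1 s2) (o1 s1)) (vsub (o2 s1 s2) (o1 s1)) = r2\<^sup>2"
      unfolding diff_self w using spherical_codeD(3)[OF C2 hC[OF s2]] .
    have "inner_n n (w s1 s2) (o1 s1) = r1 * prepend_zero n (h s2) 0"
      unfolding w_def by (rule inner_n_householder_axis[OF n spherical_codeD(3)[OF C1 o1C[OF s1]]])
    thus "inner_n n (vsub (o2 s1 s2) (o1 s1)) (o1 s1) = 0"
      unfolding diff using n by (simp add: prepend_zero_def)
  qed
  moreover have "\<delta>2\<^sup>2 \<le> inner_n n (vsub (o2 s1 s2) (o2 s1 s2')) (vsub (o2 s1 s2) (o2 s1 s2'))"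
    if "s2 < card C2" "s2' < card C2" "s2 \<noteq> s2'" for s1 s2 s2'
  proof -
    have "h s2 \<noteq> h s2'" using h that unfolding bij_betw_def inj_on_def by blast
    with that have "\<delta>2\<^sup>2 \<le> inner_n (n - 1) (vsub (h s2) (h s2')) (vsub (h s2) (h s2'))"
      by (intro spherical_codeD(4)[OF C2] hC)
    also have "\<dots> = inner_n n (vsub (w s1 s2) (w s1 s2')) (vsub (w s1 s2) (w s1 s2'))"
      unfolding inner_n_diff_self w by (simp add: inner_n_commute)
    finally show ?thesis unfolding diff_diff .
  qed
  ultimately show ?thesis using that unfolding nested_arrangement_def by blast
qed

section \<open>The two-level code and its rate\<close>

text \<open>The body of the theorem at blocklength n.\<close>

definition two_level_code :: "real \<Rightarrow> real \<Rightarrow> real \<Rightarrow> nat \<Rightarrow> nat \<Rightarrow> nat \<Rightarrow>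
    (nat \<Rightarrow> nat \<Rightarrow> real) \<Rightarrow> (nat \<Rightarrow> nat \<Rightarrow> nat \<Rightarrow> real) \<Rightarrow> bool" where
  "two_level_code \<sigma> P c n N1 N2 o1 o2 \<longleftrightarrow>
     (let lam = 2 * Phi (- log 2 (real n)); d = 3 * \<sigma> * log 2 (real n);
          r1 = sqrt (c * real n); r2 = root 4 (c * real n) in
      (\<forall>s1<N1. o1 s1 \<in> Rn n \<and> norm_n n (o1 s1) = r1) \<and>
      angle_dense n (\<lambda>i. 0) o1 {..<N1} d \<and>
      (\<forall>s1<N1.
         (\<forall>s2<N2. o2 s1 s2 \<in> Rn n \<and>
             norm_n n (vsub (o2 s1 s2) (o1 s1)) = r2 \<and>
             inner_n n (vsub (o2 s1 s2) (o1 s1)) (o1 s1) = 0) \<and>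
         angle_dense n (o1 s1) (o2 s1) {..<N2} d) \<and>
      DI_code n \<sigma> P ({..<N1} \<times> {..<N2}) (2 * lam) lam
        (\<lambda>(s1, s2). o2 s1 s2)
        (\<lambda>(s1, s2). {y \<in> Rn n.
           \<bar>inner_n n (vsub y (o1 s1)) (o1 s1)\<bar> / r1 \<le> \<sigma> * log 2 (real n) \<and>
           \<bar>inner_n n (vsub y (o2 s1 s2)) (vsub (o2 s1 s2) (o1 s1))\<bar> / r2
              \<le> \<sigma> * log 2 (real n)}))"

lemma root4_power2: "x \<ge> 0 \<Longrightarrow> (root 4 x)\<^sup>2 = sqrt x"
  using real_root_mult_exp[of 2 2 x] by (simp add: sqrt_def)

lemma two_level_code_if_nested_arrangement:
  fixes \<sigma> P c :: real and n :: nat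
  defines "d \<equiv> 3 * \<sigma> * log 2 (real n)" and "r1 \<equiv> sqrt (c * real n)" and "r2 \<equiv> root 4 (c * real n)"
  assumes \<sigma>: "\<sigma> > 0" and c: "c > 0" and n: "n \<ge> 2"
    and large: "8 \<le> \<sigma> * log 2 (real n)" and power: "r1 \<le> (P - c) * real n"
    and arr: "nested_arrangement n r1 (sqrt (2 * d * r1)) r2 (sqrt (2 * d * r2)) N1 N2 o1 o2"
  shows "two_level_code \<sigma> P c n N1 N2 o1 o2"
proof -
  define t where "t = log 2 (real n)"
  have t: "t \<ge> 1" unfolding t_def using n by simp
  have r1: "r1 > 0" and r2: "r2 > 0" unfolding r1_def r2_def using c n by simp_all
  have r2_r1: "r2\<^sup>2 = r1" unfolding r1_def r2_def using c by (simp add: root4_power2)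
  have d: "d > 0" unfolding d_def using \<sigma> n by simp
  have \<delta>1: "(sqrt (2 * d * r1))\<^sup>2 = 2 * d * r1" and \<delta>2: "(sqrt (2 * d * r2))\<^sup>2 = 2 * d * r2"
    using d r1 r2 by simp_all
  have o1: "\<And>s1. s1 < N1 \<Longrightarrow> o1 s1 \<in> Rn n \<and> inner_n n (o1 s1) (o1 s1) = r1\<^sup>2"
    and sep1: "\<And>s1 s1'. s1 < N1 \<Longrightarrow> s1' < N1 \<Longrightarrow> s1 \<noteq> s1' \<Longrightarrow>
        2 * d * r1 \<le> inner_n n (vsub (o1 s1) (o1 s1')) (vsub (o1 s1) (o1 s1'))"
    and o2: "\<And>s1 s2. s1 < N1 \<Longrightarrow> s2 < N2 \<Longrightarrow> o2 s1 s2 \<in> Rn n \<and>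
        inner_n n (vsub (o2 s1 s2) (o1 s1)) (vsub (o2 s1 s2) (o1 s1)) = r2\<^sup>2 \<and>
        inner_n n (vsub (o2 s1 s2) (o1 s1)) (o1 s1) = 0"
    and sep2: "\<And>s1 s2 s2'. s1 < N1 \<Longrightarrow> s2 < N2 \<Longrightarrow> s2' < N2 \<Longrightarrow> s2 \<noteq> s2' \<Longrightarrow>
        2 * d * r2 \<le> inner_n n (vsub (o2 s1 s2) (o2 s1 s2')) (vsub (o2 s1 s2) (o2 s1 s2'))"
    using arr unfolding nested_arrangement_def \<delta>1 \<delta>2 by blast+
  have "angle_dense n (\<lambda>i. 0) o1 {..<N1} d"
    by (rule angle_dense_if_separated[OF r1]) (use o1 sep1 in \<open>auto simp: vsub_def\<close>)
  moreover have "angle_dense n (o1 s1) (o2 s1) {..<N2} d" if "s1 < N1" for s1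
    by (rule angle_dense_if_separated[OF r2]) (use o2 sep2 that in auto)
  moreover have "DI_code n \<sigma> P ({..<N1} \<times> {..<N2}) (2 * (2 * Phi (- t))) (2 * Phi (- t))
      (\<lambda>(s1, s2). o2 s1 s2) (\<lambda>(s1, s2). nested_decoder n r1 r2 (\<sigma> * t) (o1 s1) (o2 s1 s2))"
  proof (rule DI_code_nested_arrangement[OF \<sigma> r1 r2 arr])
    have "4 * \<sigma> * t * r2 \<le> 2 * d * r2" unfolding d_def t_def[symmetric] using \<sigma> r2 t by simp
    thus "4 * \<sigma> * t * r2 \<le> (sqrt (2 * d * r2))\<^sup>2" unfolding \<delta>2 .
    have "2 * r1 \<le> \<sigma> * t / 4 * r1" using large r1 unfolding t_def by (intro mult_right_mono) auto
    hence "2 * r2\<^sup>2 + 2 * \<sigma> * t * r1 \<le> 3/8 * (2 * d * r1)"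
      unfolding d_def t_def[symmetric] r2_r1 by (simp add: algebra_simps)
    thus "2 * r2\<^sup>2 + 2 * \<sigma> * t * r1 \<le> 3/8 * (sqrt (2 * d * r1))\<^sup>2" unfolding \<delta>1 .
    have "r1\<^sup>2 = c * real n" unfolding r1_def using c by simp
    thus "r1\<^sup>2 + r2\<^sup>2 \<le> real n * P" using power unfolding r2_r1 by (simp add: algebra_simps)
  qed
  ultimately show ?thesis
    using o1 o2 r1 r2
    unfolding two_level_code_def Let_def d_def r1_def[symmetric] r2_def[symmetric] t_def nested_decoder_def
    by (simp add: norm_n_eqI)
qed

text \<open>The lower bound for log (N1 N2) / (n log n) furnished by spherical codes of radii r1, r2
  and separations sqrt (2 d r1), sqrt (2 d r2).\<close>

definition rate_bound :: "real \<Rightarrow> real \<Rightarrow> nat \<Rightarrow> real" where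
  "rate_bound \<sigma> c n =
     (let d = 3 * \<sigma> * log 2 (real n); r1 = sqrt (c * real n); r2 = root 4 (c * real n) in
      (code_size_bound (real n) (r1 / sqrt (2 * d * r1))
         + code_size_bound (real n - 1) (r2 / sqrt (2 * d * r2))) / (real n * log 2 (real n)))"

lemma exists_two_level_code:
  fixes \<sigma> P c :: real and n :: nat
  defines "d \<equiv> 3 * \<sigma> * log 2 (real n)" and "r1 \<equiv> sqrt (c * real n)" and "r2 \<equiv> root 4 (c * real n)"
  assumes \<sigma>: "\<sigma> > 0" and c: "c > 0" and n: "n \<ge> 2"
    and small1: "2 * d \<le> r1" and small2: "2 * d \<le> r2"
    and large: "8 \<le> \<sigma> * log 2 (real n)" and power: "r1 \<le> (P - c) * real n"
  obtains N1 N2 o1 o2 where "two_level_code \<sigma> P c n N1 N2 o1 o2"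
    and "rate_bound \<sigma> c n \<le> log 2 (real (N1 * N2)) / (real n * log 2 (real n))"
proof -
  have d: "d > 0" unfolding d_def using \<sigma> n by simp
  have r1: "r1 > 0" and r2: "r2 > 0" unfolding r1_def r2_def using c n by simp_all
  have "sqrt (2 * d * r) \<le> r" if "2 * d \<le> r" "r > 0" for r
    using real_sqrt_le_mono[OF mult_right_mono[OF that(1), of r]] that by simp
  note \<delta>_le = this[OF small1 r1] this[OF small2 r2]
  have \<delta>_pos: "0 < sqrt (2 * d * r1)" "0 < sqrt (2 * d * r2)" using d r1 r2 by simp_all
  have dim: "1 \<le> n" "1 \<le> n - 1" using n by simp_all
  obtain C1 where C1: "spherical_code n r1 (sqrt (2 * d * r1)) C1" "0 < card C1"
    and N1: "code_size_bound (real n) (r1 / sqrt (2 * d * r1)) \<le> log 2 (real (card C1))"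
    using exists_spherical_code_log_card[OF dim(1) \<delta>_pos(1) \<delta>_le(1)] by blast
  obtain C2 where C2: "spherical_code (n - 1) r2 (sqrt (2 * d * r2)) C2" "0 < card C2"
    and N2: "code_size_bound (real (n - 1)) (r2 / sqrt (2 * d * r2)) \<le> log 2 (real (card C2))"
    using exists_spherical_code_log_card[OF dim(2) \<delta>_pos(2) \<delta>_le(2)] by blast
  obtain o1 o2 where
    "nested_arrangement n r1 (sqrt (2 * d * r1)) r2 (sqrt (2 * d * r2)) (card C1) (card C2) o1 o2"
    using exists_nested_arrangement[OF dim(1) C1(1) C2(1)] by blast
  hence "two_level_code \<sigma> P c n (card C1) (card C2) o1 o2"
    using two_level_code_if_nested_arrangement[OF \<sigma> c n large] power
    unfolding d_def r1_def r2_def by blast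
  moreover have "rate_bound \<sigma> c n \<le> log 2 (real (card C1 * card C2)) / (real n * log 2 (real n))"
  proof -
    have "log 2 (real (card C1 * card C2)) = log 2 (real (card C1)) + log 2 (real (card C2))"
      using C1(2) C2(2) by (simp add: log_mult)
    moreover have "real n * log 2 (real n) > 0" using n by simp
    ultimately show ?thesis
      using N1 N2 n unfolding rate_bound_def Let_def d_def[symmetric] r1_def[symmetric] r2_def[symmetric]
      by (auto intro!: divide_right_mono simp: of_nat_diff)
  qed
  ultimately show ?thesis by (rule that)
qed

lemma rate_bound_tendsto:
  assumes "\<sigma> > 0" and "c > 0"
  shows "rate_bound \<sigma> c \<longlonglongrightarrow> 3/8"
  unfolding rate_bound_def Let_def code_size_bound_def using assms by real_asymp

lemma eventually_exists_two_level_code: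
  assumes \<sigma>: "\<sigma> > 0" and c: "0 < c" and cP: "c < P"
  shows "\<forall>\<^sub>F n in sequentially. \<exists>N1 N2 o1 o2. two_level_code \<sigma> P c n N1 N2 o1 o2 \<and>
           rate_bound \<sigma> c n \<le> log 2 (real (N1 * N2)) / (real n * log 2 (real n))"
proof -
  have "\<forall>\<^sub>F n in sequentially. 2 \<le> n \<and>
      2 * (3 * \<sigma> * log 2 (real n)) \<le> sqrt (c * real n) \<and>
      2 * (3 * \<sigma> * log 2 (real n)) \<le> root 4 (c * real n) \<and>
      8 \<le> \<sigma> * log 2 (real n) \<and> sqrt (c * real n) \<le> (P - c) * real n"
    using \<sigma> c cP by (intro eventually_conj eventually_ge_at_top) real_asymp+
  thus ?thesis
  proof eventually_elim
    case (elim n)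
    then obtain N1 N2 o1 o2 where "two_level_code \<sigma> P c n N1 N2 o1 o2"
      and "rate_bound \<sigma> c n \<le> log 2 (real (N1 * N2)) / (real n * log 2 (real n))"
      using exists_two_level_code[OF \<sigma> c] by blast
    thus ?case by blast
  qed
qed

lemma exists_two_level_codes:
  assumes \<sigma>: "\<sigma> > 0" and c: "0 < c" and cP: "c < P"
  obtains n0 N1 N2 o1 o2
  where "\<And>n. n \<ge> n0 \<Longrightarrow> two_level_code \<sigma> P c n (N1 n) (N2 n) (o1 n) (o2 n)"
    and "\<And>\<epsilon>. \<epsilon> > 0 \<Longrightarrow> \<forall>\<^sub>F n in sequentially.
           3/8 - \<epsilon> \<le> log 2 (real (N1 n * N2 n)) / (real n * log 2 (real n))"
proof -
  define good where "good n N1 N2 o1 o2 \<longleftrightarrow> two_level_code \<sigma> P c n N1 N2 o1 o2 \<and>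
      rate_bound \<sigma> c n \<le> log 2 (real (N1 * N2)) / (real n * log 2 (real n))" for n N1 N2 o1 o2
  obtain n0 where "\<And>n. n \<ge> n0 \<Longrightarrow> \<exists>N1 N2 o1 o2. good n N1 N2 o1 o2"
    using eventually_exists_two_level_code[OF \<sigma> c cP]
    unfolding good_def eventually_sequentially by blast
  hence "\<forall>n. \<exists>N1 N2 o1 o2. n \<ge> n0 \<longrightarrow> good n N1 N2 o1 o2" by blast
  then obtain N1 N2 o1 o2 where "\<forall>n. n \<ge> n0 \<longrightarrow> good n (N1 n) (N2 n) (o1 n) (o2 n)"
    by metis
  hence codes: "\<And>n. n \<ge> n0 \<Longrightarrow> two_level_code \<sigma> P c n (N1 n) (N2 n) (o1 n) (o2 n) \<and>
      rate_bound \<sigma> c n \<le> log 2 (real (N1 n * N2 n)) / (real n * log 2 (real n))"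
    unfolding good_def by blast
  show ?thesis
  proof (rule that)
    show "two_level_code \<sigma> P c n (N1 n) (N2 n) (o1 n) (o2 n)" if "n \<ge> n0" for n
      using codes[OF that] by blast
    fix \<epsilon> :: real assume "\<epsilon> > 0"
    hence "\<forall>\<^sub>F n in sequentially. 3/8 - \<epsilon> < rate_bound \<sigma> c n"
      by (intro order_tendstoD(1)[OF rate_bound_tendsto[OF \<sigma> c]]) simp
    with eventually_ge_at_top[of n0]
    show "\<forall>\<^sub>F n in sequentially. 3/8 - \<epsilon> \<le> log 2 (real (N1 n * N2 n)) / (real n * log 2 (real n))"
      by eventually_elim (use codes in force)
  qed
qed

section \<open>Achievability\<close>

lemma DI_code_reindex:
  assumes "DI_code n \<sigma> P I l1 l2 u D" and "inj_on g J" and "g ` J \<subseteq> I" and "finite J"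
  shows "DI_code n \<sigma> P J l1 l2 (u \<circ> g) (D \<circ> g)"
  using assms unfolding DI_code_def inj_on_def by (force simp: image_subset_iff)

lemma Phi_minus_log_tendsto_0: "(\<lambda>n::nat. Phi (- log 2 (real n))) \<longlonglongrightarrow> 0"
proof -
  interpret real_distribution "density lborel std_normal_density" by (rule real_dist_normal_dist)
  have "Phi = cdf (density lborel std_normal_density)" unfolding Phi_def cdf_def by simp
  moreover have "filterlim (\<lambda>n::nat. - log 2 (real n)) at_bot sequentially" by real_asymp
  ultimately show ?thesis using filterlim_compose[OF cdf_lim_at_bot] by (simp add: o_def)
qed

lemma achievable_lin_rate_if_product_codes:
  assumes R: "R > 0"
    and codes: "\<And>n. n \<ge> n0 \<Longrightarrow> \<exists>u D. DI_code n \<sigma> P ({..<N1 n} \<times> {..<N2 n}) (l1 n) (l2 n) u D"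
    and l1: "l1 \<longlonglongrightarrow> 0" and l2: "l2 \<longlonglongrightarrow> 0"
    and rate: "\<And>\<epsilon>. \<epsilon> > 0 \<Longrightarrow> \<forall>\<^sub>F n in sequentially.
                 R - \<epsilon> \<le> log 2 (real (N1 n * N2 n)) / (real n * log 2 (real n))"
  shows "achievable_lin_rate \<sigma> P R"
  unfolding achievable_lin_rate_def
proof (intro conjI allI impI R)
  fix \<epsilon> :: real assume "\<epsilon> > 0"
  obtain n1 where n1: "\<And>n. n \<ge> n1 \<Longrightarrow>
      R - \<epsilon> \<le> log 2 (real (N1 n * N2 n)) / (real n * log 2 (real n))"
    using rate[OF \<open>\<epsilon> > 0\<close>] unfolding eventually_sequentially by blast
  obtain u D where uD: "\<And>n. n \<ge> n0 \<Longrightarrow> DI_code n \<sigma> P ({..<N1 n} \<times> {..<N2 n}) (l1 n) (l2 n) (u n) (D n)"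
    using codes by metis
  define g where "g n k = (k div N2 n, k mod N2 n)" for n k
  have "DI_code n \<sigma> P {..<N1 n * N2 n} (l1 n) (l2 n) (u n \<circ> g n) (D n \<circ> g n)" if "n \<ge> n0" for n
  proof (rule DI_code_reindex[OF uD[OF that]])
    show "inj_on (g n) {..<N1 n * N2 n}"
      unfolding g_def by (rule inj_onI) (metis div_mult_mod_eq prod.inject)
    show "g n ` {..<N1 n * N2 n} \<subseteq> {..<N1 n} \<times> {..<N2 n}"
    proof (rule image_subsetI)
      fix k assume k: "k \<in> {..<N1 n * N2 n}"
      hence "0 < N2 n" by (cases "N2 n") auto
      thus "g n k \<in> {..<N1 n} \<times> {..<N2 n}" using k unfolding g_def by (simp add: less_mult_imp_div_less)
    qed
  qed simp
  thus "\<exists>n0 N l1 l2 (u :: nat \<Rightarrow> nat \<Rightarrow> nat \<Rightarrow> real) D.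
      (\<forall>n\<ge>n0. DI_code n \<sigma> P {..<N n} (l1 n) (l2 n) (u n) (D n) \<and>
               R - \<epsilon> \<le> log 2 (real (N n)) / (real n * log 2 (real n))) \<and>
      l1 \<longlonglongrightarrow> 0 \<and> l2 \<longlonglongrightarrow> 0"
    using n1 l1 l2
    by (intro exI[of _ "max n0 n1"] exI[of _ "\<lambda>n. N1 n * N2 n"] exI[of _ l1] exI[of _ l2]
        exI[of _ "\<lambda>n. u n \<circ> g n"] exI[of _ "\<lambda>n. D n \<circ> g n"]) auto
qed

theorem theorem3:
  fixes P \<sigma> c :: real
  assumes "P > 0" and "\<sigma> > 0" and "0 < c" and "c < P"
  shows "(\<exists>n0 (N1 :: nat \<Rightarrow> nat) (N2 :: nat \<Rightarrow> nat)
            (o1 :: nat \<Rightarrow> nat \<Rightarrow> (nat \<Rightarrow> real)) (o2 :: nat \<Rightarrow> nat \<Rightarrow> nat \<Rightarrow> (nat \<Rightarrow> real)).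
     (\<forall>n\<ge>n0.
        let lam = 2 * Phi (- log 2 (real n)); d = 3 * \<sigma> * log 2 (real n);
            r1 = sqrt (c * real n); r2 = root 4 (c * real n) in
        (\<forall>s1<N1 n. o1 n s1 \<in> Rn n \<and> norm_n n (o1 n s1) = r1) \<and>
        angle_dense n (\<lambda>i. 0) (o1 n) {..<N1 n} d \<and>
        (\<forall>s1<N1 n.
           (\<forall>s2<N2 n. o2 n s1 s2 \<in> Rn n \<and>
               norm_n n (vsub (o2 n s1 s2) (o1 n s1)) = r2 \<and>
               inner_n n (vsub (o2 n s1 s2) (o1 n s1)) (o1 n s1) = 0) \<and>
           angle_dense n (o1 n s1) (o2 n s1) {..<N2 n} d) \<and>
        DI_code n \<sigma> P ({..<N1 n} \<times> {..<N2 n}) (2 * lam) lam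
          (\<lambda>(s1, s2). o2 n s1 s2)
          (\<lambda>(s1, s2). {y \<in> Rn n.
             \<bar>inner_n n (vsub y (o1 n s1)) (o1 n s1)\<bar> / r1 \<le> \<sigma> * log 2 (real n) \<and>
             \<bar>inner_n n (vsub y (o2 n s1 s2)) (vsub (o2 n s1 s2) (o1 n s1))\<bar> / r2
                \<le> \<sigma> * log 2 (real n)})) \<and>
     (\<forall>\<epsilon>>0. \<forall>\<^sub>F n in sequentially.
        log 2 (real (N1 n * N2 n)) / (real n * log 2 (real n)) \<ge> 3/8 - \<epsilon>))
   \<and> achievable_lin_rate \<sigma> P (3/8)"
proof -
  obtain n0 N1 N2 o1 o2
    where codes: "\<And>n. n \<ge> n0 \<Longrightarrow> two_level_code \<sigma> P c n (N1 n) (N2 n) (o1 n) (o2 n)"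
      and rate: "\<And>\<epsilon>. \<epsilon> > 0 \<Longrightarrow> \<forall>\<^sub>F n in sequentially.
                   3/8 - \<epsilon> \<le> log 2 (real (N1 n * N2 n)) / (real n * log 2 (real n))"
    using exists_two_level_codes[OF assms(2-4)] by blast
  have "achievable_lin_rate \<sigma> P (3/8)"
  proof (rule achievable_lin_rate_if_product_codes[OF _ _ _ _ rate])
    show "\<exists>u D. DI_code n \<sigma> P ({..<N1 n} \<times> {..<N2 n})
        (2 * (2 * Phi (- log 2 (real n)))) (2 * Phi (- log 2 (real n))) u D" if "n \<ge> n0" for n
      using codes[OF that] unfolding two_level_code_def Let_def by blast
    show "(\<lambda>n. 2 * (2 * Phi (- log 2 (real n)))) \<longlonglongrightarrow> 0" "(\<lambda>n. 2 * Phi (- log 2 (real n))) \<longlonglongrightarrow> 0"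
      using Phi_minus_log_tendsto_0 by (auto intro: tendsto_mult_right_zero)
  qed simp
  with codes rate show ?thesis unfolding two_level_code_def by blast
qed

end
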